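(* Let $1\le p<\infty$, $\theta,\rho\in(0,1)$, $\Omega\in\mathbb{IR}^{d_0}$ a box with nonempty interior, and $\Phi:\mathbb R^{d_0}\to\mathbb R^{d_{L+1}}$ a feedforward neural network with differentiable activation $\sigma$ such that $\sigma,\sigma'$ admit interval enclosures $\Sigma,\Sigma'$ that are Hölder continuous on $\mathbb{IR}$. Define $f_{\Phi,1,p}(x)=\sum_{i=1}^{d_{L+1}}\big(|\Phi_i(x)|^p+\sum_{j=1}^{d_0}|\partial_{x_j}\Phi_i(x)|^p\big)$ and $$F_{\Phi,1,p}(K)=\sum_{i=1}^{d_{L+1}}\Big(|\mathrm{Fval}_{\Phi,L+1,\Sigma}(K)_i|^p+\sum_{j=1}^{d_0}|\mathrm{Jac}_{\Phi,0,\Sigma,\Sigma'}(K)_{ij}|^p\Big).$$ Then $f_{\Phi,1,p}$ is continuous, $F_{\Phi,1,p}$ is a Hölder continuous interval enclosure of $f_{\Phi,1,p}$ on $\Omega$, and AdaQuad with integrand $f_{\Phi,1,p}$, enclosure $F_{\Phi,1,p}$, a positive-weight quadrature rule exact for constants, marking $\mathrm{D\ddot orfler}_\theta$ and refinement $\mathrm{H\ddot older}_\rho$ yields for all $n$ $$\big|\,\|\Phi\|_{W^{1,p}(\Omega;\mathbb R^{d_{L+1}})}-\mathrm Q_n^{1/p}\big|\le\eta_n^{1/p},\qquad\eta_{n+1}\le(1-\theta(1-\rho))\eta_n.$$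
   Context: $\|\Phi\|_{W^{k,p}(\Omega;\mathbb R^m)}=(\sum_{i=1}^m\sum_{|\alpha|\le k}\int_\Omega|D^\alpha\Phi_i|^pdx)^{1/p}$, sum over multi-indices each once. Intervals, boxes, interval arithmetic $X\circ Y=\{x\circ y\}$, interval matrix products via usual formula (left to right), width $w$ (max entry width), $|X|=\{|x|:x\in X\}$, $X^\gamma=[\underline X^\gamma,\overline X^\gamma]$ for $\underline X\ge0$. Interval enclosure of $\phi$ on $\Omega$: inclusion isotonic $F$ with $\phi(K)\subset F(K)$ for boxes $K\subset\Omega$; Hölder continuous: $w(F(K))\le Cw(K)^\gamma$, $C>0$, $\gamma\in(0,1]$. Network: weights $W^{(\ell)}$, biases $b^{(\ell)}$, $z^{(\ell)}=W^{(\ell-1)}x^{(\ell-1)}+b^{(\ell-1)}$, $x^{(\ell)}=\sigma(z^{(\ell)})$, $x^{(0)}=u$, $\Phi=z^{(L+1)}$. $\mathrm{Fval}_{\Phi,\ell,\Sigma}(K)$: $X^{(0)}=K$; for $k=0,\dots,\ell-1$: $Z^{(k+1)}=W^{(k)}X^{(k)}+b^{(k)}$, $X^{(k+1)}=\Sigma(Z^{(k+1)})$; return $Z^{(\ell)}$. $\mathrm{Jac}_{\Phi,\ell,\Sigma,\Sigma'}(K)$: $J^{(L)}=W^{(L)}$; for $k=L-1,\dots,\ell$: $J^{(k)}=(J^{(k+1)}\mathrm{diag}(\Sigma'(\mathrm{Fval}_{\Phi,k+1,\Sigma}(K))))W^{(k)}$; return $J^{(\ell)}$. AdaQuad: $\mathcal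 P_0=\{\Omega\}$; with $\eta_K=w(F(K))\mathrm{vol}(K)$, $\mathcal P_{n+1}=(\mathcal P_n\setminus\widetilde{\mathcal P}_n)\cup\bigcup_{K\in\widetilde{\mathcal P}_n}\mathcal R(K)$ with $\widetilde{\mathcal P}_n$ the marked set; $\mathrm Q_n=\sum_{K\in\mathcal P_n}\mathcal I(f,K)$, $\eta_n=\sum_{K\in\mathcal P_n}\eta_K$. Quadrature $\mathcal I(f,K)=\sum_iw_if(x_i)$, $x_i\in K$, $w_i>0$, $\sum w_i=\mathrm{vol}(K)$. $\mathrm{D\ddot orfler}_\theta$: repeatedly mark all unmarked elements of maximal indicator until the marked sum is $\ge\theta$ times the total. $\mathrm{H\ddot older}_\rho(K)$ with a Hölder constant $C$ and exponent $\gamma$ of $F$: if $\eta_K=0$ return $\{K\}$; else split each side $K_i$ (length $l_i$) uniformly into $m_i=\lceil l_i(C\mathrm{vol}(K)/(\rho\eta_K))^{1/\gamma}\rceil$ pieces and return all product boxes. *)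

theory Defs
  imports "HOL-Analysis.Analysis" "HOL-Probability.Probability" "HOL-Library.Interval"
begin

type_synonym ivl = "real interval"
type_synonym box = "real interval list"
type_synonym ivec = "nat \<Rightarrow> real interval"
type_synonym imat = "nat \<Rightarrow> nat \<Rightarrow> real interval"

text \<open>X^gamma for nonnegative intervals\<close>
definition ipowr :: "ivl \<Rightarrow> real \<Rightarrow> ivl" where
  "ipowr X g = Ivl (lower X powr g) (upper X powr g)"

definition imatmul :: "nat \<Rightarrow> imat \<Rightarrow> imat \<Rightarrow> imat" where
  "imatmul n A B = (\<lambda>i j. \<Sum>l<n. A i l * B l j)"

definition idiag :: "ivec \<Rightarrow> imat" where
  "idiag D = (\<lambda>i j. if i = j then D i else 0)"

definition ipoint_mat :: "(nat \<Rightarrow> nat \<Rightarrow> real) \<Rightarrow> imat" where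
  "ipoint_mat M = (\<lambda>i j. interval_of (M i j))"

definition in_box :: "(nat \<Rightarrow> real) \<Rightarrow> box \<Rightarrow> bool" where
  "in_box x K \<longleftrightarrow> (\<forall>j<length K. x j \<in> set_of (K ! j))"

definition box_width :: "box \<Rightarrow> real" where
  "box_width K = Max (width ` set K)"

definition box_vol :: "box \<Rightarrow> real" where
  "box_vol K = prod_list (map width K)"

definition subbox :: "box \<Rightarrow> box \<Rightarrow> bool" where
  "subbox K K' \<longleftrightarrow> length K = length K' \<and> (\<forall>j<length K. set_of (K ! j) \<subseteq> set_of (K' ! j))"

definition ivl_enclosure :: "(real \<Rightarrow> real) \<Rightarrow> (ivl \<Rightarrow> ivl) \<Rightarrow> bool" where
  "ivl_enclosure s S \<longleftrightarrow>
     (\<forall>X Y. set_of X \<subseteq> set_of Y \<longrightarrow> set_of (S X) \<subseteq> set_of (S Y)) \<and>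
     (\<forall>X. s ` set_of X \<subseteq> set_of (S X))"

definition ivl_hoelder :: "(ivl \<Rightarrow> ivl) \<Rightarrow> bool" where
  "ivl_hoelder S \<longleftrightarrow> (\<exists>C g. C > 0 \<and> 0 < g \<and> g \<le> 1 \<and> (\<forall>X. width (S X) \<le> C * width X powr g))"

definition box_enclosure :: "box \<Rightarrow> ((nat \<Rightarrow> real) \<Rightarrow> real) \<Rightarrow> (box \<Rightarrow> ivl) \<Rightarrow> bool" where
  "box_enclosure \<Omega> phi F \<longleftrightarrow>
     (\<forall>K K'. subbox K K' \<and> subbox K' \<Omega> \<longrightarrow> set_of (F K) \<subseteq> set_of (F K')) \<and>
     (\<forall>K x. subbox K \<Omega> \<and> in_box x K \<longrightarrow> phi x \<in> set_of (F K))"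

definition box_hoelder :: "box \<Rightarrow> (box \<Rightarrow> ivl) \<Rightarrow> real \<Rightarrow> real \<Rightarrow> bool" where
  "box_hoelder \<Omega> F C g \<longleftrightarrow> C > 0 \<and> 0 < g \<and> g \<le> 1 \<and>
     (\<forall>K. subbox K \<Omega> \<longrightarrow> width (F K) \<le> C * box_width K powr g)"

text \<open>Network with L hidden layers, widths d 0, ..., d (L+1), weights W l (a d(l+1) x d(l) matrix),
  biases b l, activation s. Vectors are nat-indexed.\<close>

fun nn_x :: "nat \<Rightarrow> (nat \<Rightarrow> nat) \<Rightarrow> (nat \<Rightarrow> nat \<Rightarrow> nat \<Rightarrow> real) \<Rightarrow> (nat \<Rightarrow> nat \<Rightarrow> real)
    \<Rightarrow> (real \<Rightarrow> real) \<Rightarrow> (nat \<Rightarrow> real) \<Rightarrow> (nat \<Rightarrow> real)" where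
  "nn_x 0 d W b s u = u"
| "nn_x (Suc k) d W b s u = (\<lambda>i. s ((\<Sum>j<d k. W k i j * nn_x k d W b s u j) + b k i))"

definition nn_eval :: "nat \<Rightarrow> (nat \<Rightarrow> nat) \<Rightarrow> (nat \<Rightarrow> nat \<Rightarrow> nat \<Rightarrow> real) \<Rightarrow> (nat \<Rightarrow> nat \<Rightarrow> real)
    \<Rightarrow> (real \<Rightarrow> real) \<Rightarrow> (nat \<Rightarrow> real) \<Rightarrow> (nat \<Rightarrow> real)" where
  "nn_eval L d W b s u = (\<lambda>i. (\<Sum>j<d L. W L i j * nn_x L d W b s u j) + b L i)"

fun ival_x :: "nat \<Rightarrow> (nat \<Rightarrow> nat) \<Rightarrow> (nat \<Rightarrow> nat \<Rightarrow> nat \<Rightarrow> real) \<Rightarrow> (nat \<Rightarrow> nat \<Rightarrow> real)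
    \<Rightarrow> (ivl \<Rightarrow> ivl) \<Rightarrow> box \<Rightarrow> ivec" where
  "ival_x 0 d W b S K = (\<lambda>j. K ! j)"
| "ival_x (Suc k) d W b S K =
     (\<lambda>i. S ((\<Sum>j<d k. interval_of (W k i j) * ival_x k d W b S K j) + interval_of (b k i)))"

fun Fval :: "nat \<Rightarrow> (nat \<Rightarrow> nat) \<Rightarrow> (nat \<Rightarrow> nat \<Rightarrow> nat \<Rightarrow> real) \<Rightarrow> (nat \<Rightarrow> nat \<Rightarrow> real)
    \<Rightarrow> (ivl \<Rightarrow> ivl) \<Rightarrow> box \<Rightarrow> ivec" where
  "Fval 0 d W b S K = (\<lambda>j. K ! j)"  \<comment> \<open>not used\<close>
| "Fval (Suc k) d W b S K =
     (\<lambda>i. (\<Sum>j<d k. interval_of (W k i j) * ival_x k d W b S K j) + interval_of (b k i))"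

text \<open>Jac: jac_rec n computes J^(L-n)\<close>
fun jac_rec :: "nat \<Rightarrow> nat \<Rightarrow> (nat \<Rightarrow> nat) \<Rightarrow> (nat \<Rightarrow> nat \<Rightarrow> nat \<Rightarrow> real) \<Rightarrow> (nat \<Rightarrow> nat \<Rightarrow> real)
    \<Rightarrow> (ivl \<Rightarrow> ivl) \<Rightarrow> (ivl \<Rightarrow> ivl) \<Rightarrow> box \<Rightarrow> imat" where
  "jac_rec 0 L d W b S S' K = ipoint_mat (W L)"
| "jac_rec (Suc n) L d W b S S' K =
     (let k = L - Suc n in
      imatmul (d (Suc k))
        (imatmul (d (Suc k)) (jac_rec n L d W b S S' K)
           (idiag (\<lambda>i. S' (Fval (Suc k) d W b S K i))))
        (ipoint_mat (W k)))"

definition Jac :: "nat \<Rightarrow> nat \<Rightarrow> (nat \<Rightarrow> nat) \<Rightarrow> (nat \<Rightarrow> nat \<Rightarrow> nat \<Rightarrow> real) \<Rightarrow> (nat \<Rightarrow> nat \<Rightarrow> real)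
    \<Rightarrow> (ivl \<Rightarrow> ivl) \<Rightarrow> (ivl \<Rightarrow> ivl) \<Rightarrow> box \<Rightarrow> imat" where
  "Jac l L d W b S S' K = jac_rec (L - l) L d W b S S' K"

definition partial :: "((nat \<Rightarrow> real) \<Rightarrow> real) \<Rightarrow> nat \<Rightarrow> (nat \<Rightarrow> real) \<Rightarrow> real" where
  "partial g j x = deriv (\<lambda>t. g (x(j := t))) (x j)"

definition f_W1p :: "nat \<Rightarrow> (nat \<Rightarrow> nat) \<Rightarrow> (nat \<Rightarrow> nat \<Rightarrow> nat \<Rightarrow> real) \<Rightarrow> (nat \<Rightarrow> nat \<Rightarrow> real)
    \<Rightarrow> (real \<Rightarrow> real) \<Rightarrow> real \<Rightarrow> (nat \<Rightarrow> real) \<Rightarrow> real" where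
  "f_W1p L d W b s p x =
     (\<Sum>i<d (Suc L). \<bar>nn_eval L d W b s x i\<bar> powr p
        + (\<Sum>j<d 0. \<bar>partial (\<lambda>y. nn_eval L d W b s y i) j x\<bar> powr p))"

definition F_W1p :: "nat \<Rightarrow> (nat \<Rightarrow> nat) \<Rightarrow> (nat \<Rightarrow> nat \<Rightarrow> nat \<Rightarrow> real) \<Rightarrow> (nat \<Rightarrow> nat \<Rightarrow> real)
    \<Rightarrow> (ivl \<Rightarrow> ivl) \<Rightarrow> (ivl \<Rightarrow> ivl) \<Rightarrow> real \<Rightarrow> box \<Rightarrow> ivl" where
  "F_W1p L d W b S S' p K =
     (\<Sum>i<d (Suc L). ipowr (abs_interval (Fval (Suc L) d W b S K i)) p
        + (\<Sum>j<d 0. ipowr (abs_interval (Jac 0 L d W b S S' K i j)) p))"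

text \<open>Lebesgue measure on R^n (as extensional functions on {..<n})\<close>
abbreviation lebesgue_n :: "nat \<Rightarrow> (nat \<Rightarrow> real) measure" where
  "lebesgue_n n \<equiv> PiM {..<n} (\<lambda>_. lborel)"

definition box_set :: "box \<Rightarrow> (nat \<Rightarrow> real) set" where
  "box_set K = PiE {..<length K} (\<lambda>j. set_of (K ! j))"

definition sobolev_W1p_norm :: "nat \<Rightarrow> box \<Rightarrow> nat \<Rightarrow> ((nat \<Rightarrow> real) \<Rightarrow> nat \<Rightarrow> real) \<Rightarrow> real \<Rightarrow> real" where
  "sobolev_W1p_norm d0 \<Omega> m Phi p =
     (\<Sum>i<m. (LINT x:box_set \<Omega>|lebesgue_n d0. \<bar>Phi x i\<bar> powr p)
        + (\<Sum>j<d0. (LINT x:box_set \<Omega>|lebesgue_n d0. \<bar>partial (\<lambda>y. Phi y i) j x\<bar> powr p))) powr (1 / p)"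

type_synonym qrule = "box \<Rightarrow> (real \<times> (nat \<Rightarrow> real)) list"

definition valid_qrule :: "box \<Rightarrow> qrule \<Rightarrow> bool" where
  "valid_qrule \<Omega> R \<longleftrightarrow> (\<forall>K. subbox K \<Omega> \<longrightarrow>
      (\<forall>(w, x) \<in> set (R K). w > 0 \<and> in_box x K) \<and> sum_list (map fst (R K)) = box_vol K)"

definition quad :: "qrule \<Rightarrow> ((nat \<Rightarrow> real) \<Rightarrow> real) \<Rightarrow> box \<Rightarrow> real" where
  "quad R f K = sum_list (map (\<lambda>(w, x). w * f x) (R K))"

definition indicator_eta :: "(box \<Rightarrow> ivl) \<Rightarrow> box \<Rightarrow> real" where
  "indicator_eta F K = width (F K) * box_vol K"

text \<open>Each non-terminal
  step marks at least one element, so card P iterations suffice; once the stopping criterion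
  holds the step is the identity.\<close>
definition doerfler_step :: "real \<Rightarrow> (box \<Rightarrow> real) \<Rightarrow> box set \<Rightarrow> box set \<Rightarrow> box set" where
  "doerfler_step th eta P M =
     (if th * sum eta P \<le> sum eta M then M
      else M \<union> {K \<in> P - M. eta K = Max (eta ` (P - M))})"

definition doerfler :: "real \<Rightarrow> (box \<Rightarrow> real) \<Rightarrow> box set \<Rightarrow> box set" where
  "doerfler th eta P = (doerfler_step th eta P ^^ card P) {}"

definition split_uniform :: "ivl \<Rightarrow> nat \<Rightarrow> ivl list" where
  "split_uniform X m = map (\<lambda>k. Ivl (lower X + real k * width X / real m)
                                     (lower X + real (Suc k) * width X / real m)) [0..<m]"

definition hoelder_refine :: "real \<Rightarrow> real \<Rightarrow> real \<Rightarrow> (box \<Rightarrow> ivl) \<Rightarrow> box \<Rightarrow> box set" where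
  "hoelder_refine C g rho F K =
     (let eta = indicator_eta F K in
      if eta = 0 then {K}
      else set (product_lists
        (map (\<lambda>X. split_uniform X (nat \<lceil>width X * (C * box_vol K / (rho * eta)) powr (1 / g)\<rceil>)) K)))"

fun adaquad_P :: "real \<Rightarrow> real \<Rightarrow> real \<Rightarrow> real \<Rightarrow> (box \<Rightarrow> ivl) \<Rightarrow> box \<Rightarrow> nat \<Rightarrow> box set" where
  "adaquad_P th C g rho F \<Omega> 0 = {\<Omega>}"
| "adaquad_P th C g rho F \<Omega> (Suc n) =
     (let P = adaquad_P th C g rho F \<Omega> n; M = doerfler th (indicator_eta F) P in
      (P - M) \<union> \<Union> (hoelder_refine C g rho F ` M))"

definition adaquad_Q :: "real \<Rightarrow> real \<Rightarrow> real \<Rightarrow> real \<Rightarrow> (box \<Rightarrow> ivl) \<Rightarrow> box \<Rightarrow> qrule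
    \<Rightarrow> ((nat \<Rightarrow> real) \<Rightarrow> real) \<Rightarrow> nat \<Rightarrow> real" where
  "adaquad_Q th C g rho F \<Omega> R f n = (\<Sum>K\<in>adaquad_P th C g rho F \<Omega> n. quad R f K)"

definition adaquad_eta :: "real \<Rightarrow> real \<Rightarrow> real \<Rightarrow> real \<Rightarrow> (box \<Rightarrow> ivl) \<Rightarrow> box \<Rightarrow> nat \<Rightarrow> real" where
  "adaquad_eta th C g rho F \<Omega> n = (\<Sum>K\<in>adaquad_P th C g rho F \<Omega> n. indicator_eta F K)"

end

theory Submission
  imports Defs
begin

text \<open>The integrand is a sum of \<open>p\<close>-th powers of the network outputs and of the entries of its
  Jacobian, and by the chain rule the Jacobian is the backpropagated product of the layer Jacobians.
  Running the forward pass and the backpropagation in interval arithmetic therefore encloses every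
  summand, and the enclosure is Hoelder continuous because Hoelder bounds survive sums, products of
  bounded factors, the activation enclosures and \<open>p\<close>-th powers of bounded intervals.

  On every box \<open>K\<close> of the AdaQuad partition, the integral and the quadrature value both lie in
  \<open>vol K \<cdot> F K\<close>, so they differ by at most \<open>\<eta>\<^sub>K\<close>. Doerfler marking collects a \<open>\<theta>\<close>-fraction of
  \<open>\<eta>\<^sub>n\<close>, and the Hoelder refinement splits each marked box into children so small that their
  indicators add up to at most \<open>\<rho> \<eta>\<^sub>K\<close>; this gives the contraction. Finally, \<open>t \<mapsto> t^(1/p)\<close> is
  \<open>1/p\<close>-Hoelder with constant \<open>1\<close>.\<close>

section \<open>Derivatives of the network\<close>

text \<open>\<open>nn_pre k\<close> is the pre-activation \<open>z^(k+1)\<close> of the paper, and \<open>nn_dx k \<dots> j0\<close> is the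
  derivative of \<open>x^(k)\<close> in the input coordinate \<open>j0\<close> (forward mode).\<close>

definition nn_pre :: "nat \<Rightarrow> (nat \<Rightarrow> nat) \<Rightarrow> (nat \<Rightarrow> nat \<Rightarrow> nat \<Rightarrow> real) \<Rightarrow> (nat \<Rightarrow> nat \<Rightarrow> real)
    \<Rightarrow> (real \<Rightarrow> real) \<Rightarrow> (nat \<Rightarrow> real) \<Rightarrow> nat \<Rightarrow> real" where
  "nn_pre k d W b s u i = (\<Sum>j<d k. W k i j * nn_x k d W b s u j) + b k i"

lemma nn_x_Suc_eq_nn_pre: "nn_x (Suc k) d W b s u i = s (nn_pre k d W b s u i)"
  by (simp add: nn_pre_def)

lemma nn_eval_eq_nn_pre: "nn_eval L d W b s u i = nn_pre L d W b s u i"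
  by (simp add: nn_pre_def nn_eval_def)

fun nn_dx :: "nat \<Rightarrow> (nat \<Rightarrow> nat) \<Rightarrow> (nat \<Rightarrow> nat \<Rightarrow> nat \<Rightarrow> real) \<Rightarrow> (nat \<Rightarrow> nat \<Rightarrow> real)
    \<Rightarrow> (real \<Rightarrow> real) \<Rightarrow> (real \<Rightarrow> real) \<Rightarrow> nat \<Rightarrow> (nat \<Rightarrow> real) \<Rightarrow> nat \<Rightarrow> real" where
  "nn_dx 0 d W b s s' j0 u i = (if i = j0 then 1 else 0)"
| "nn_dx (Suc k) d W b s s' j0 u i =
     s' (nn_pre k d W b s u i) * (\<Sum>j<d k. W k i j * nn_dx k d W b s s' j0 u j)"

lemma has_real_derivative_nn_x:
  assumes s': "\<forall>x. (s has_real_derivative s' x) (at x)"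
  shows "((\<lambda>t. nn_x k d W b s (u(j0 := t)) i) has_real_derivative nn_dx k d W b s s' j0 (u(j0 := t)) i) (at t)"
proof (induction k arbitrary: i)
  case 0
  show ?case by (cases "i = j0") simp_all
next
  case (Suc k)
  have "((\<lambda>t. nn_pre k d W b s (u(j0 := t)) i) has_real_derivative
      (\<Sum>j<d k. W k i j * nn_dx k d W b s s' j0 (u(j0 := t)) j)) (at t)"
    unfolding nn_pre_def
    by (rule DERIV_add[where E=0, simplified]) (auto intro!: DERIV_sum DERIV_cmult Suc.IH)
  from DERIV_chain2[OF s'[rule_format] this] show ?case
    unfolding nn_x_Suc_eq_nn_pre nn_dx.simps by simp
qed

lemma partial_nn_eval:
  assumes "\<forall>x. (s has_real_derivative s' x) (at x)"
  shows "partial (\<lambda>y. nn_eval L d W b s y i) j0 u = (\<Sum>j<d L. W L i j * nn_dx L d W b s s' j0 u j)"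
proof -
  have "((\<lambda>t. nn_eval L d W b s (u(j0 := t)) i) has_real_derivative
      (\<Sum>j<d L. W L i j * nn_dx L d W b s s' j0 (u(j0 := t)) j)) (at t)" for t
    unfolding nn_eval_def
    by (auto intro!: derivative_eq_intros DERIV_sum DERIV_cmult has_real_derivative_nn_x[OF assms]
        simp: mult.commute)
  from DERIV_imp_deriv[OF this[of "u j0"]] show ?thesis
    unfolding partial_def by simp
qed

definition rmatmul :: "nat \<Rightarrow> (nat \<Rightarrow> nat \<Rightarrow> real) \<Rightarrow> (nat \<Rightarrow> nat \<Rightarrow> real) \<Rightarrow> nat \<Rightarrow> nat \<Rightarrow> real" where
  "rmatmul n A B = (\<lambda>i j. \<Sum>l<n. A i l * B l j)"

definition rdiag :: "(nat \<Rightarrow> real) \<Rightarrow> nat \<Rightarrow> nat \<Rightarrow> real" where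
  "rdiag D = (\<lambda>i j. if i = j then D i else 0)"

fun rjac_rec :: "nat \<Rightarrow> nat \<Rightarrow> (nat \<Rightarrow> nat) \<Rightarrow> (nat \<Rightarrow> nat \<Rightarrow> nat \<Rightarrow> real) \<Rightarrow> (nat \<Rightarrow> nat \<Rightarrow> real)
    \<Rightarrow> (real \<Rightarrow> real) \<Rightarrow> (real \<Rightarrow> real) \<Rightarrow> (nat \<Rightarrow> real) \<Rightarrow> nat \<Rightarrow> nat \<Rightarrow> real" where
  "rjac_rec 0 L d W b s s' u = W L"
| "rjac_rec (Suc n) L d W b s s' u =
     (let k = L - Suc n in
      rmatmul (d (Suc k))
        (rmatmul (d (Suc k)) (rjac_rec n L d W b s s' u) (rdiag (\<lambda>i. s' (nn_pre k d W b s u i))))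
        (W k))"

lemma rmatmul_rdiag: "rmatmul n A (rdiag D) i m = (if m < n then A i m * D m else 0)"
  unfolding rmatmul_def rdiag_def
  by (simp add: if_distrib[of "\<lambda>x. A i _ * x"] sum.delta' cong: if_cong)

text \<open>Reverse mode (\<^const>\<open>rjac_rec\<close>) and forward mode (\<^const>\<open>nn_dx\<close>) evaluate the same
  product of layer Jacobians, bracketed from opposite ends.\<close>

lemma rjac_rec_backprop:
  assumes "n \<le> L"
  shows "(\<Sum>l<d (L - n). rjac_rec n L d W b s s' u i l * nn_dx (L - n) d W b s s' j0 u l)
       = (\<Sum>l<d L. W L i l * nn_dx L d W b s s' j0 u l)"
  using assms
proof (induction n)
  case 0
  then show ?case by simp
next
  case (Suc n)
  define k where "k = L - Suc n"
  have Lk: "L - n = Suc k" using Suc.prems unfolding k_def by simp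
  let ?J = "rjac_rec n L d W b s s' u i" and ?D = "nn_dx k d W b s s' j0 u"
    and ?a = "\<lambda>m. s' (nn_pre k d W b s u m)"
  have "(\<Sum>l<d k. rjac_rec (Suc n) L d W b s s' u i l * ?D l)
      = (\<Sum>l<d k. (\<Sum>m<d (Suc k). ?J m * ?a m * W k m l) * ?D l)"
    by (simp add: k_def[symmetric] Let_def rmatmul_def[of _ _ "W k"] rmatmul_rdiag)
  also have "\<dots> = (\<Sum>m<d (Suc k). ?J m * ?a m * (\<Sum>l<d k. W k m l * ?D l))"
    by (simp add: sum_distrib_left sum_distrib_right sum.swap[of _ "{..<d k}"] mult.assoc)
  also have "\<dots> = (\<Sum>m<d (L - n). ?J m * nn_dx (L - n) d W b s s' j0 u m)"
    by (simp add: Lk mult.assoc)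
  also have "\<dots> = (\<Sum>l<d L. W L i l * nn_dx L d W b s s' j0 u l)"
    using Suc by simp
  finally show ?case by (simp add: k_def)
qed

lemma partial_nn_eval_eq_rjac_rec:
  assumes "\<forall>x. (s has_real_derivative s' x) (at x)" and "j0 < d 0"
  shows "partial (\<lambda>y. nn_eval L d W b s y i) j0 u = rjac_rec L L d W b s s' u i j0"
proof -
  have "partial (\<lambda>y. nn_eval L d W b s y i) j0 u
      = (\<Sum>l<d (L - L). rjac_rec L L d W b s s' u i l * nn_dx (L - L) d W b s s' j0 u l)"
    unfolding partial_nn_eval[OF assms(1)] by (rule rjac_rec_backprop[symmetric]) simp
  also have "\<dots> = rjac_rec L L d W b s s' u i j0"
    using assms(2) by (simp add: if_distrib[of "\<lambda>x. _ * x"] sum.delta' cong: if_cong)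
  finally show ?thesis .
qed

section \<open>Continuity of the integrand\<close>

lemma ivl_enclosure_hoelder_continuous:
  assumes E: "ivl_enclosure s S" and H: "ivl_hoelder S"
  shows "continuous_on UNIV s"
proof -
  obtain C g where Cg: "0 < g" "\<And>X. width (S X) \<le> C * width X powr g"
    using H unfolding ivl_hoelder_def by blast
  have bound: "\<bar>s y - s x\<bar> \<le> C * \<bar>y - x\<bar> powr g" for x y
  proof -
    define X where "X = Ivl (min x y) (max x y)"
    have "x \<in> set_of X" "y \<in> set_of X" and wX: "width X = \<bar>y - x\<bar>"
      unfolding X_def set_of_eq width_def by (simp_all add: Ivl.rep_eq lower.rep_eq upper.rep_eq)
    then have "s x \<in> set_of (S X)" "s y \<in> set_of (S X)"
      using E unfolding ivl_enclosure_def by blast+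
    then have "\<bar>s y - s x\<bar> \<le> width (S X)" unfolding set_of_eq width_def by auto
    also have "\<dots> \<le> C * \<bar>y - x\<bar> powr g" using Cg(2)[of X] wX by simp
    finally show ?thesis .
  qed
  have "isCont s x" for x
  proof -
    have "((\<lambda>y. C * \<bar>y - x\<bar> powr g) \<longlongrightarrow> C * \<bar>x - x\<bar> powr g) (at x)"
      using Cg(1) by (intro tendsto_intros) auto
    then have "((\<lambda>y. C * \<bar>y - x\<bar> powr g) \<longlongrightarrow> 0) (at x)" using Cg(1) by simp
    then have "((\<lambda>y. s y - s x) \<longlongrightarrow> 0) (at x)"
      by (rule Lim_null_comparison[rotated]) (use bound in auto)
    then show ?thesis unfolding isCont_def using LIM_zero_cancel by blast
  qed
  then show ?thesis by (simp add: continuous_at_imp_continuous_on)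
qed

lemma continuous_on_nn_x_nn_dx:
  assumes s: "continuous_on UNIV s" and s': "continuous_on UNIV s'"
  shows "continuous_on UNIV (\<lambda>u. nn_x k d W b s u i) \<and> continuous_on UNIV (\<lambda>u. nn_dx k d W b s s' j0 u i)"
proof (induction k arbitrary: i)
  case 0
  then show ?case by (simp add: continuous_on_product_coordinates)
next
  case (Suc k)
  have pre: "continuous_on UNIV (\<lambda>u. nn_pre k d W b s u i)" for i
    unfolding nn_pre_def using Suc.IH by (auto intro!: continuous_intros)
  show ?case unfolding nn_x_Suc_eq_nn_pre nn_dx.simps
    using continuous_on_compose2[OF s pre] continuous_on_compose2[OF s' pre] Suc.IH
    by (auto intro!: continuous_intros)
qed

context
  fixes s s' :: "real \<Rightarrow> real"
  assumes s': "\<forall>x. (s has_real_derivative s' x) (at x)" and s'_cont: "continuous_on UNIV s'"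
begin

lemma continuous_on_activation: "continuous_on UNIV s"
  using s' by (meson DERIV_isCont continuous_at_imp_continuous_on)

lemma continuous_on_nn_eval: "continuous_on UNIV (\<lambda>u. nn_eval L d W b s u i)"
  unfolding nn_eval_def using continuous_on_nn_x_nn_dx[OF continuous_on_activation s'_cont]
  by (auto intro!: continuous_intros)

lemma continuous_on_partial_nn_eval: "continuous_on UNIV (partial (\<lambda>y. nn_eval L d W b s y i) j)"
  unfolding partial_nn_eval[OF s', abs_def]
  using continuous_on_nn_x_nn_dx[OF continuous_on_activation s'_cont] by (auto intro!: continuous_intros)

lemma continuous_on_f_W1p:
  assumes "0 < p"
  shows "continuous_on UNIV (f_W1p L d W b s p)"
  unfolding f_W1p_def[abs_def] using assms
  by (intro continuous_intros continuous_on_powr' continuous_on_nn_eval continuous_on_partial_nn_eval) auto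

end

section \<open>Interval enclosure of the integrand\<close>

lemma sum_in_set_of_sum:
  fixes f :: "'b \<Rightarrow> real"
  assumes "\<And>i. i \<in> A \<Longrightarrow> f i \<in> set_of (F i)"
  shows "sum f A \<in> set_of (sum F A)"
  using assms
proof (induction A rule: infinite_finite_induct)
  case (insert x A)
  then show ?case by (simp add: plus_in_intervalI)
qed (simp_all add: set_of_eq)

lemma set_of_sum_mono:
  fixes F G :: "'b \<Rightarrow> real interval"
  assumes "\<And>i. i \<in> A \<Longrightarrow> set_of (F i) \<subseteq> set_of (G i)"
  shows "set_of (sum F A) \<subseteq> set_of (sum G A)"
  using assms by (induction A rule: infinite_finite_induct) (auto intro: set_of_add_inc[THEN subsetD])

lemma set_of_abs_interval_mono:
  "set_of X \<subseteq> set_of Y \<Longrightarrow> set_of (abs_interval X) \<subseteq> set_of (abs_interval Y)"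
  for X Y :: "real interval"
  unfolding set_of_abs_interval by blast

lemma lower_abs_interval_nonneg: "0 \<le> lower (abs_interval (X::real interval))"
  by simp

lemma lower_Ivl: "lower (Ivl a b) = min a (b::real)" and upper_Ivl: "upper (Ivl a b) = b"
  by (simp_all add: Ivl.rep_eq lower.rep_eq upper.rep_eq)

lemma set_of_ipowr:
  assumes "0 \<le> lower X" "0 \<le> p"
  shows "set_of (ipowr X p) = {lower X powr p .. upper X powr p}"
proof -
  have "lower X powr p \<le> upper X powr p" by (rule powr_mono2[OF assms(2,1) lower_le_upper])
  then show ?thesis unfolding ipowr_def set_of_eq by (simp add: lower_Ivl upper_Ivl)
qed

lemma set_of_ipowr_mono:
  assumes "0 \<le> lower X" "0 \<le> p" "set_of X \<subseteq> set_of Y" "0 \<le> lower Y"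
  shows "set_of (ipowr X p) \<subseteq> set_of (ipowr Y p)"
proof -
  have "lower Y \<le> lower X" "upper X \<le> upper Y"
    using assms(3) lower_le_upper[of X] unfolding set_of_eq by auto
  then have "lower Y powr p \<le> lower X powr p" "upper X powr p \<le> upper Y powr p"
    using assms order_trans[OF _ lower_le_upper[of X]] by (auto intro: powr_mono2)
  then show ?thesis using assms by (auto simp: set_of_ipowr)
qed

lemma abs_powr_in_ipowr_abs:
  assumes "x \<in> set_of X" "0 \<le> p"
  shows "\<bar>x\<bar> powr p \<in> set_of (ipowr (abs_interval X) p)"
proof -
  have "\<bar>x\<bar> \<in> set_of (abs_interval X)" using assms(1) by (simp add: set_of_abs_interval)
  then have "lower (abs_interval X) powr p \<le> \<bar>x\<bar> powr p" "\<bar>x\<bar> powr p \<le> upper (abs_interval X) powr p"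
    using assms(2) lower_abs_interval_nonneg[of X] unfolding set_of_eq
    by (auto intro!: powr_mono2 simp del: lower_abs_interval upper_abs_interval)
  then show ?thesis
    by (simp add: set_of_ipowr[OF lower_abs_interval_nonneg assms(2)] del: lower_abs_interval upper_abs_interval)
qed

lemma set_of_ipowr_abs_mono:
  "set_of X \<subseteq> set_of Y \<Longrightarrow> 0 \<le> p \<Longrightarrow>
    set_of (ipowr (abs_interval X) p) \<subseteq> set_of (ipowr (abs_interval Y) p)"
  by (intro set_of_ipowr_mono set_of_abs_interval_mono lower_abs_interval_nonneg)

lemma ivl_enclosure_mem: "ivl_enclosure s S \<Longrightarrow> a \<in> set_of X \<Longrightarrow> s a \<in> set_of (S X)"
  unfolding ivl_enclosure_def by blast

lemma ivl_enclosure_mono: "ivl_enclosure s S \<Longrightarrow> set_of X \<subseteq> set_of Y \<Longrightarrow> set_of (S X) \<subseteq> set_of (S Y)"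
  unfolding ivl_enclosure_def by blast

lemma ival_x_Suc_eq_Fval: "ival_x (Suc k) d W b S K i = S (Fval (Suc k) d W b S K i)"
  by simp

context
  fixes s :: "real \<Rightarrow> real" and S :: "ivl \<Rightarrow> ivl"
  assumes S: "ivl_enclosure s S"
begin

lemma nn_x_in_ival_x:
  assumes "in_box u K" "length K = d 0" "k = 0 \<longrightarrow> j < d 0"
  shows "nn_x k d W b s u j \<in> set_of (ival_x k d W b S K j)"
  using assms(3)
proof (induction k arbitrary: j)
  case 0
  then show ?case using assms(1,2) unfolding in_box_def by simp
next
  case (Suc k)
  have "nn_pre k d W b s u j \<in> set_of (Fval (Suc k) d W b S K j)"
    unfolding nn_pre_def Fval.simps
    by (intro plus_in_intervalI sum_in_set_of_sum times_in_intervalI Suc.IH) auto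
  then show ?case unfolding nn_x_Suc_eq_nn_pre ival_x_Suc_eq_Fval by (rule ivl_enclosure_mem[OF S])
qed

lemma nn_pre_in_Fval:
  assumes "in_box u K" "length K = d 0"
  shows "nn_pre k d W b s u i \<in> set_of (Fval (Suc k) d W b S K i)"
  unfolding nn_pre_def Fval.simps
  by (intro plus_in_intervalI sum_in_set_of_sum times_in_intervalI nn_x_in_ival_x[where d=d, OF assms]) auto

lemma set_of_ival_x_mono:
  assumes "subbox K K'" "length K = d 0" "k = 0 \<longrightarrow> j < d 0"
  shows "set_of (ival_x k d W b S K j) \<subseteq> set_of (ival_x k d W b S K' j)"
  using assms(3)
proof (induction k arbitrary: j)
  case 0
  then show ?case using assms(1,2) unfolding subbox_def by simp
next
  case (Suc k)
  have "set_of (Fval (Suc k) d W b S K j) \<subseteq> set_of (Fval (Suc k) d W b S K' j)"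
    unfolding Fval.simps
    by (intro set_of_add_inc set_of_sum_mono set_of_mul_inc order_refl Suc.IH) auto
  then show ?case unfolding ival_x_Suc_eq_Fval by (rule ivl_enclosure_mono[OF S])
qed

lemma set_of_Fval_mono:
  assumes "subbox K K'" "length K = d 0"
  shows "set_of (Fval (Suc k) d W b S K i) \<subseteq> set_of (Fval (Suc k) d W b S K' i)"
  unfolding Fval.simps
  by (intro set_of_add_inc set_of_sum_mono set_of_mul_inc order_refl set_of_ival_x_mono[where d=d, OF assms]) auto

end

lemma rmatmul_in_imatmul:
  assumes "\<And>i j. A i j \<in> set_of (AA i j)" "\<And>i j. B i j \<in> set_of (BB i j)"
  shows "rmatmul n A B i j \<in> set_of (imatmul n AA BB i j)"
  unfolding rmatmul_def imatmul_def by (intro sum_in_set_of_sum times_in_intervalI assms)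

lemma set_of_imatmul_mono:
  assumes "\<And>i j. set_of (A i j) \<subseteq> set_of (AA i j)" "\<And>i j. set_of (B i j) \<subseteq> set_of (BB i j)"
  shows "set_of (imatmul n A B i j) \<subseteq> set_of (imatmul n AA BB i j)"
  unfolding imatmul_def by (intro set_of_sum_mono set_of_mul_inc assms)

lemma rdiag_in_idiag: "(\<And>i. D i \<in> set_of (DD i)) \<Longrightarrow> rdiag D i j \<in> set_of (idiag DD i j)"
  unfolding rdiag_def idiag_def by (simp add: set_of_eq)

lemma set_of_idiag_mono:
  "(\<And>i. set_of (D i) \<subseteq> set_of (DD i)) \<Longrightarrow> set_of (idiag D i j) \<subseteq> set_of (idiag DD i j)"
  unfolding idiag_def by simp

lemma mem_ipoint_mat: "M i j \<in> set_of (ipoint_mat M i j)"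
  unfolding ipoint_mat_def by (simp add: set_of_eq)

context
  fixes s s' :: "real \<Rightarrow> real" and S S' :: "ivl \<Rightarrow> ivl"
  assumes S: "ivl_enclosure s S" and S': "ivl_enclosure s' S'"
begin

lemma rjac_rec_in_jac_rec:
  assumes "in_box u K" "length K = d 0"
  shows "rjac_rec n L d W b s s' u i j \<in> set_of (jac_rec n L d W b S S' K i j)"
proof (induction n arbitrary: i j)
  case 0
  then show ?case by (simp add: mem_ipoint_mat)
next
  case (Suc n)
  show ?case
    unfolding rjac_rec.simps jac_rec.simps Let_def
    by (intro rmatmul_in_imatmul rdiag_in_idiag mem_ipoint_mat Suc.IH
        ivl_enclosure_mem[OF S'] nn_pre_in_Fval[where d=d, OF S assms])
qed

lemma set_of_jac_rec_mono:
  assumes "subbox K K'" "length K = d 0"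
  shows "set_of (jac_rec n L d W b S S' K i j) \<subseteq> set_of (jac_rec n L d W b S S' K' i j)"
proof (induction n arbitrary: i j)
  case 0
  then show ?case by simp
next
  case (Suc n)
  show ?case
    unfolding jac_rec.simps Let_def
    by (intro set_of_imatmul_mono set_of_idiag_mono order_refl Suc.IH
        ivl_enclosure_mono[OF S'] set_of_Fval_mono[where d=d, OF S assms])
qed

lemma f_W1p_in_F_W1p:
  assumes s': "\<forall>x. (s has_real_derivative s' x) (at x)" and "0 \<le> p" "in_box u K" "length K = d 0"
  shows "f_W1p L d W b s p u \<in> set_of (F_W1p L d W b S S' p K)"
proof -
  have "nn_eval L d W b s u i \<in> set_of (Fval (Suc L) d W b S K i)" for i
    unfolding nn_eval_eq_nn_pre by (rule nn_pre_in_Fval[where d=d, OF S assms(3,4)])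
  moreover have "partial (\<lambda>y. nn_eval L d W b s y i) j u \<in> set_of (jac_rec L L d W b S S' K i j)"
    if "j < d 0" for i j
    unfolding partial_nn_eval_eq_rjac_rec[where d=d, OF s' that] by (rule rjac_rec_in_jac_rec[where d=d, OF assms(3,4)])
  ultimately show ?thesis
    unfolding f_W1p_def F_W1p_def Jac_def diff_zero
    by (intro sum_in_set_of_sum plus_in_intervalI abs_powr_in_ipowr_abs \<open>0 \<le> p\<close>) auto
qed

lemma set_of_F_W1p_mono:
  assumes "0 \<le> p" "subbox K K'" "length K = d 0"
  shows "set_of (F_W1p L d W b S S' p K) \<subseteq> set_of (F_W1p L d W b S S' p K')"
  unfolding F_W1p_def Jac_def
  by (intro set_of_sum_mono set_of_add_inc set_of_ipowr_abs_mono assms(1)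
      set_of_Fval_mono[where d=d, OF S assms(2,3)] set_of_jac_rec_mono[where d=d, OF assms(2,3)])

lemma box_enclosure_F_W1p:
  assumes "\<forall>x. (s has_real_derivative s' x) (at x)" "0 \<le> p" "length \<Omega> = d 0"
  shows "box_enclosure \<Omega> (f_W1p L d W b s p) (F_W1p L d W b S S' p)"
  unfolding box_enclosure_def
  using assms f_W1p_in_F_W1p set_of_F_W1p_mono by (auto simp: subbox_def)

end

section \<open>Hoelder continuity of the enclosure\<close>

definition mag :: "real interval \<Rightarrow> real" where
  "mag X = max \<bar>lower X\<bar> \<bar>upper X\<bar>"

lemma abs_le_mag: "x \<in> set_of X \<Longrightarrow> \<bar>x\<bar> \<le> mag X"
  unfolding mag_def set_of_eq by auto

lemma mag_nonneg: "0 \<le> mag X"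
  unfolding mag_def by simp

lemma lower_upper_in_set_of: "lower X \<in> set_of X" "upper X \<in> set_of X"
  by (auto simp: set_of_eq)

lemma mag_mono: "set_of X \<subseteq> set_of Y \<Longrightarrow> mag X \<le> mag Y"
  using lower_upper_in_set_of[of X] unfolding mag_def[of X] by (blast intro: max.boundedI abs_le_mag)

lemma width_nonneg: "0 \<le> width (X::real interval)"
  unfolding width_def by simp

lemma width_mono: "set_of X \<subseteq> set_of Y \<Longrightarrow> width X \<le> width (Y::real interval)"
  using lower_upper_in_set_of[of X] unfolding width_def set_of_eq by fastforce

lemma width_times_le: "width (X * Y) \<le> mag X * width Y + mag Y * width (X::real interval)"
proof -
  obtain a b where ab: "a \<in> set_of X" "b \<in> set_of Y" "upper (X * Y) = a * b"
    using lower_upper_in_set_of(2)[of "X * Y"] unfolding set_of_times by blast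
  obtain c e where ce: "c \<in> set_of X" "e \<in> set_of Y" "lower (X * Y) = c * e"
    using lower_upper_in_set_of(1)[of "X * Y"] unfolding set_of_times by blast
  have "width (X * Y) = a * (b - e) + e * (a - c)" unfolding width_def ab ce by (simp add: algebra_simps)
  also have "\<dots> \<le> \<bar>a\<bar> * \<bar>b - e\<bar> + \<bar>e\<bar> * \<bar>a - c\<bar>"
    by (intro add_mono) (auto simp: abs_mult[symmetric])
  also have "\<dots> \<le> mag X * width Y + mag Y * width X"
    using ab ce unfolding width_def set_of_eq
    by (intro add_mono mult_mono) (auto simp: mag_nonneg abs_le_mag set_of_eq)
  finally show ?thesis .
qed

lemma width_abs_interval_le: "width (abs_interval X) \<le> width (X::real interval)"
proof -
  obtain a c where "a \<in> set_of X" "c \<in> set_of X"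
    "upper (abs_interval X) = \<bar>a\<bar>" "lower (abs_interval X) = \<bar>c\<bar>"
    using lower_upper_in_set_of[of "abs_interval X"] unfolding set_of_abs_interval by blast
  moreover from this have "\<bar>a - c\<bar> \<le> width X" unfolding width_def set_of_eq by auto
  ultimately show ?thesis unfolding width_def[of "abs_interval X"] by linarith
qed

lemma powr_diff_le_mean_value:
  fixes l u M p :: real
  assumes "0 \<le> l" "l \<le> u" "u \<le> M" "1 \<le> p"
  shows "u powr p - l powr p \<le> p * M powr (p - 1) * (u - l)"
proof (cases "l = u")
  case False
  then have lu: "l < u" using assms by simp
  have "continuous_on {l..u} (\<lambda>t. t powr p)"
    using assms by (intro continuous_on_powr' continuous_intros) auto
  moreover have "(\<lambda>t. t powr p) differentiable at x" if "l < x" for x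
    using has_real_derivative_powr[of x p] that assms real_differentiable_def by fastforce
  ultimately obtain f z where z: "l < z" "z < u" "((\<lambda>t. t powr p) has_real_derivative f) (at z)"
      "u powr p - l powr p = (u - l) * f"
    using MVT[OF lu] by blast
  have "f = p * z powr (p - 1)"
    using DERIV_unique[OF z(3) has_real_derivative_powr[of z p]] z assms by simp
  moreover have "z powr (p - 1) \<le> M powr (p - 1)"
    by (rule powr_mono2) (use assms z in auto)
  ultimately show ?thesis using z lu assms by (simp add: mult_left_mono mult.commute mult.left_commute)
qed simp

lemma width_ipowr_abs_le:
  assumes "1 \<le> p" "mag X \<le> M"
  shows "width (ipowr (abs_interval X) p) \<le> p * M powr (p - 1) * width X"
proof -
  let ?A = "abs_interval X"
  have "width (ipowr ?A p) = upper ?A powr p - lower ?A powr p"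
    unfolding width_def ipowr_def using assms(1) powr_mono2[OF _ lower_abs_interval_nonneg lower_le_upper, of p X]
    by (simp add: lower_Ivl upper_Ivl del: lower_abs_interval upper_abs_interval)
  also have "\<dots> \<le> p * M powr (p - 1) * width ?A"
    unfolding width_def[of ?A] using assms
    by (intro powr_diff_le_mean_value lower_abs_interval_nonneg) (auto simp: mag_def)
  also have "\<dots> \<le> p * M powr (p - 1) * width X"
    using assms(1) by (intro mult_left_mono width_abs_interval_le) auto
  finally show ?thesis .
qed

lemma subbox_refl: "subbox K K"
  unfolding subbox_def by simp

lemma subbox_trans: "subbox A B \<Longrightarrow> subbox B C \<Longrightarrow> subbox A C"
  unfolding subbox_def by (metis order_trans)

lemma length_subbox: "subbox K \<Omega> \<Longrightarrow> length K = length \<Omega>"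
  unfolding subbox_def by simp

lemma subbox_nonempty: "subbox K \<Omega> \<Longrightarrow> \<Omega> \<noteq> [] \<Longrightarrow> K \<noteq> []"
  unfolding subbox_def by auto

lemma width_nth_le_box_width: "j < length K \<Longrightarrow> width (K ! j) \<le> box_width K"
  unfolding box_width_def by (rule Max_ge) auto

lemma box_width_nonneg: "K \<noteq> [] \<Longrightarrow> 0 \<le> box_width K"
  using width_nth_le_box_width[of 0 K] width_nonneg[of "K ! 0"] by simp

lemma box_width_mono:
  assumes "subbox K \<Omega>" "\<Omega> \<noteq> []"
  shows "box_width K \<le> box_width \<Omega>"
proof -
  have "width (K ! j) \<le> box_width \<Omega>" if "j < length K" for j
  proof -
    have "j < length \<Omega>" "set_of (K ! j) \<subseteq> set_of (\<Omega> ! j)"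
      using assms(1) that unfolding subbox_def by auto
    then show ?thesis by (meson order_trans width_mono width_nth_le_box_width)
  qed
  then show ?thesis
    unfolding box_width_def[of K] using assms length_subbox[OF assms(1)]
    by (intro Max.boundedI) (auto simp: in_set_conv_nth)
qed

lemma box_width_le:
  assumes "K \<noteq> []" "\<And>j. j < length K \<Longrightarrow> width (K ! j) \<le> h"
  shows "box_width K \<le> h"
  unfolding box_width_def using assms by (intro Max.boundedI) (auto simp: in_set_conv_nth)

lemma powr_le_max_one_mult:
  fixes w D g g' :: real
  assumes "0 \<le> w" "w \<le> D" "g \<le> g'" "g' \<le> g + 1"
  shows "w powr g' \<le> max 1 D * w powr g"
proof (cases "w = 0")
  case False
  then have "w powr g' = w powr (g' - g) * w powr g" using assms by (simp add: powr_add[symmetric])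
  also have "w powr (g' - g) \<le> max 1 D powr (g' - g)"
    using assms False by (intro powr_mono2) auto
  also have "max 1 D powr (g' - g) \<le> max 1 D"
    using assms powr_mono[of "g' - g" 1 "max 1 D"] by auto
  finally show ?thesis by (simp add: mult_right_mono)
qed (use assms in simp)

definition hoelder_on :: "box \<Rightarrow> (box \<Rightarrow> ivl) \<Rightarrow> bool" where
  "hoelder_on \<Omega> G \<longleftrightarrow> (\<exists>C g. 0 \<le> C \<and> 0 < g \<and> g \<le> 1 \<and>
      (\<forall>K. subbox K \<Omega> \<longrightarrow> width (G K) \<le> C * box_width K powr g))"

text \<open>Domination bounds the magnitudes of all \<open>G K\<close> by that of \<open>G \<Omega>\<close>, which is what the
  product rule for widths needs.\<close>

definition dominated_on :: "box \<Rightarrow> (box \<Rightarrow> ivl) \<Rightarrow> bool" where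
  "dominated_on \<Omega> G \<longleftrightarrow> (\<forall>K. subbox K \<Omega> \<longrightarrow> set_of (G K) \<subseteq> set_of (G \<Omega>))"

definition hoelder_dominated :: "box \<Rightarrow> (box \<Rightarrow> ivl) \<Rightarrow> bool" where
  "hoelder_dominated \<Omega> G \<longleftrightarrow> hoelder_on \<Omega> G \<and> dominated_on \<Omega> G"

lemma hoelder_onI:
  "0 \<le> C \<Longrightarrow> 0 < g \<Longrightarrow> g \<le> 1 \<Longrightarrow> (\<And>K. subbox K \<Omega> \<Longrightarrow> width (G K) \<le> C * box_width K powr g)
    \<Longrightarrow> hoelder_on \<Omega> G"
  unfolding hoelder_on_def by blast

lemma dominated_on_binop:
  assumes "dominated_on \<Omega> G1" "dominated_on \<Omega> G2"
    and "\<And>A B C D. set_of A \<subseteq> set_of B \<Longrightarrow> set_of C \<subseteq> set_of D \<Longrightarrow> set_of (f A C) \<subseteq> set_of (f B D)"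
  shows "dominated_on \<Omega> (\<lambda>K. f (G1 K) (G2 K))"
  using assms unfolding dominated_on_def by blast

lemma mag_le_mag_top: "dominated_on \<Omega> G \<Longrightarrow> subbox K \<Omega> \<Longrightarrow> mag (G K) \<le> mag (G \<Omega>)"
  unfolding dominated_on_def by (simp add: mag_mono)

context
  fixes \<Omega> :: box
  assumes \<Omega>: "\<Omega> \<noteq> []"
begin

text \<open>Subboxes of \<open>\<Omega>\<close> have bounded width, so a Hoelder bound persists for any smaller exponent.\<close>

lemma hoelder_on_common_exponent:
  assumes "hoelder_on \<Omega> G1" "hoelder_on \<Omega> G2"
  obtains C g where "0 \<le> C" "0 < g" "g \<le> 1"
    "\<And>K. subbox K \<Omega> \<Longrightarrow> width (G1 K) \<le> C * box_width K powr g"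
    "\<And>K. subbox K \<Omega> \<Longrightarrow> width (G2 K) \<le> C * box_width K powr g"
proof -
  obtain C1 g1 where 1: "0 \<le> C1" "0 < g1" "g1 \<le> 1"
    "\<And>K. subbox K \<Omega> \<Longrightarrow> width (G1 K) \<le> C1 * box_width K powr g1"
    using assms(1) unfolding hoelder_on_def by blast
  obtain C2 g2 where 2: "0 \<le> C2" "0 < g2" "g2 \<le> 1"
    "\<And>K. subbox K \<Omega> \<Longrightarrow> width (G2 K) \<le> C2 * box_width K powr g2"
    using assms(2) unfolding hoelder_on_def by blast
  define g where "g = min g1 g2"
  define C where "C = max C1 C2 * max 1 (box_width \<Omega>)"
  have lower_exp: "C' * box_width K powr g' \<le> C * box_width K powr g"
    if "0 \<le> C'" "C' \<le> max C1 C2" "g \<le> g'" "g' \<le> 1" "subbox K \<Omega>" for C' g' K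
  proof -
    have bw: "0 \<le> box_width K" "box_width K \<le> box_width \<Omega>"
      using subbox_nonempty[OF that(5) \<Omega>] box_width_nonneg box_width_mono[OF that(5) \<Omega>] by auto
    have "C' * box_width K powr g' \<le> max C1 C2 * box_width K powr g'"
      using that by (intro mult_right_mono) auto
    also have "\<dots> \<le> max C1 C2 * (max 1 (box_width \<Omega>) * box_width K powr g)"
      using that bw 1 2 by (intro mult_left_mono powr_le_max_one_mult) (auto simp: g_def)
    finally show ?thesis by (simp add: C_def mult.assoc)
  qed
  show ?thesis
  proof (rule that[of C g])
    show "0 \<le> C" "0 < g" "g \<le> 1" using 1 2 by (auto simp: C_def g_def)
    show "width (G1 K) \<le> C * box_width K powr g" "width (G2 K) \<le> C * box_width K powr g"
      if "subbox K \<Omega>" for K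
      using order_trans[OF 1(4)[OF that] lower_exp[of C1 g1 K]]
        order_trans[OF 2(4)[OF that] lower_exp[of C2 g2 K]] that 1 2
      by (auto simp: g_def)
  qed
qed

lemma hoelder_dominated_const: "hoelder_dominated \<Omega> (\<lambda>K. interval_of c)"
  unfolding hoelder_dominated_def dominated_on_def
  by (auto intro!: hoelder_onI[of 0 1] simp: width_def)

lemma hoelder_dominated_nth: "j < length \<Omega> \<Longrightarrow> hoelder_dominated \<Omega> (\<lambda>K. K ! j)"
  unfolding hoelder_dominated_def dominated_on_def
proof (intro conjI allI impI)
  assume j: "j < length \<Omega>"
  show "hoelder_on \<Omega> (\<lambda>K. K ! j)"
  proof (rule hoelder_onI[of 1 1])
    fix K assume "subbox K \<Omega>"
    then show "width (K ! j) \<le> 1 * box_width K powr 1"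
      using j \<Omega> length_subbox[of K \<Omega>] width_nth_le_box_width[of j K] box_width_nonneg[of K] by auto
  qed auto
  show "set_of (K ! j) \<subseteq> set_of (\<Omega> ! j)" if "subbox K \<Omega>" for K
    using that j unfolding subbox_def by auto
qed

lemma hoelder_dominated_add:
  assumes "hoelder_dominated \<Omega> G1" "hoelder_dominated \<Omega> G2"
  shows "hoelder_dominated \<Omega> (\<lambda>K. G1 K + G2 K)"
proof -
  obtain C g where Cg: "0 \<le> C" "0 < g" "g \<le> 1"
    "\<And>K. subbox K \<Omega> \<Longrightarrow> width (G1 K) \<le> C * box_width K powr g"
    "\<And>K. subbox K \<Omega> \<Longrightarrow> width (G2 K) \<le> C * box_width K powr g"
    using assms unfolding hoelder_dominated_def by (meson hoelder_on_common_exponent)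
  have "hoelder_on \<Omega> (\<lambda>K. G1 K + G2 K)"
  proof (rule hoelder_onI[of "2 * C" g])
    fix K assume K: "subbox K \<Omega>"
    have "width (G1 K + G2 K) = width (G1 K) + width (G2 K)" by (simp add: width_def)
    then show "width (G1 K + G2 K) \<le> 2 * C * box_width K powr g"
      using Cg(4,5)[OF K] by linarith
  qed (use Cg in auto)
  moreover have "dominated_on \<Omega> (\<lambda>K. G1 K + G2 K)"
    using assms dominated_on_binop[where f=plus, OF _ _ set_of_add_inc]
    unfolding hoelder_dominated_def by blast
  ultimately show ?thesis unfolding hoelder_dominated_def ..
qed

lemma hoelder_dominated_sum:
  "(\<And>i. i \<in> A \<Longrightarrow> hoelder_dominated \<Omega> (G i)) \<Longrightarrow> hoelder_dominated \<Omega> (\<lambda>K. \<Sum>i\<in>A. G i K)"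
proof (induction A rule: infinite_finite_induct)
  case (insert x F)
  then show ?case by (simp add: hoelder_dominated_add)
qed (use hoelder_dominated_const[of 0] in \<open>simp_all add: zero_interval.abs_eq interval_of.abs_eq\<close>)

lemma hoelder_dominated_mul:
  assumes G1: "hoelder_dominated \<Omega> G1" and G2: "hoelder_dominated \<Omega> G2"
  shows "hoelder_dominated \<Omega> (\<lambda>K. G1 K * G2 K)"
proof -
  obtain C g where Cg: "0 \<le> C" "0 < g" "g \<le> 1"
    "\<And>K. subbox K \<Omega> \<Longrightarrow> width (G1 K) \<le> C * box_width K powr g"
    "\<And>K. subbox K \<Omega> \<Longrightarrow> width (G2 K) \<le> C * box_width K powr g"
    using assms unfolding hoelder_dominated_def by (meson hoelder_on_common_exponent)
  let ?M = "mag (G1 \<Omega>) + mag (G2 \<Omega>)"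
  have "hoelder_on \<Omega> (\<lambda>K. G1 K * G2 K)"
  proof (rule hoelder_onI[of "?M * C" g])
    fix K assume K: "subbox K \<Omega>"
    have "width (G1 K * G2 K) \<le> mag (G1 K) * width (G2 K) + mag (G2 K) * width (G1 K)"
      by (rule width_times_le)
    also have "\<dots> \<le> mag (G1 \<Omega>) * (C * box_width K powr g) + mag (G2 \<Omega>) * (C * box_width K powr g)"
      using assms K Cg unfolding hoelder_dominated_def
      by (intro add_mono mult_mono mag_le_mag_top) (auto simp: width_nonneg mag_nonneg)
    finally show "width (G1 K * G2 K) \<le> ?M * C * box_width K powr g"
      by (simp add: algebra_simps)
  qed (use Cg in \<open>auto simp: mag_nonneg\<close>)
  moreover have "dominated_on \<Omega> (\<lambda>K. G1 K * G2 K)"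
    using assms dominated_on_binop[where f=times, OF _ _ set_of_mul_inc]
    unfolding hoelder_dominated_def by blast
  ultimately show ?thesis unfolding hoelder_dominated_def ..
qed

lemma hoelder_dominated_if: "hoelder_dominated \<Omega> G \<Longrightarrow> hoelder_dominated \<Omega> (\<lambda>K. if c then G K else 0)"
  using hoelder_dominated_const[of 0] by (cases c) (simp_all add: zero_interval.abs_eq interval_of.abs_eq)

lemma hoelder_dominated_activation:
  assumes S: "ivl_enclosure s S" "ivl_hoelder S" and G: "hoelder_dominated \<Omega> G"
  shows "hoelder_dominated \<Omega> (\<lambda>K. S (G K))"
proof -
  obtain C g where Cg: "0 \<le> C" "0 < g" "g \<le> 1"
    "\<And>K. subbox K \<Omega> \<Longrightarrow> width (G K) \<le> C * box_width K powr g"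
    using G unfolding hoelder_dominated_def unfolding hoelder_on_def by blast
  obtain Cs gs where s: "Cs > 0" "0 < gs" "gs \<le> 1" "\<And>X. width (S X) \<le> Cs * width X powr gs"
    using S(2) unfolding ivl_hoelder_def by blast
  have "hoelder_on \<Omega> (\<lambda>K. S (G K))"
  proof (rule hoelder_onI[of "Cs * C powr gs" "g * gs"])
    fix K assume K: "subbox K \<Omega>"
    have "width (S (G K)) \<le> Cs * width (G K) powr gs" by (rule s(4))
    also have "\<dots> \<le> Cs * (C * box_width K powr g) powr gs"
      using s Cg(4)[OF K] by (intro mult_left_mono powr_mono2) (auto simp: width_nonneg)
    also have "\<dots> = Cs * C powr gs * box_width K powr (g * gs)"
      using Cg box_width_nonneg[of K] length_subbox[OF K] \<Omega> by (simp add: powr_mult powr_powr)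
    finally show "width (S (G K)) \<le> Cs * C powr gs * box_width K powr (g * gs)" .
  qed (use Cg s in \<open>auto intro: mult_le_one\<close>)
  moreover have "dominated_on \<Omega> (\<lambda>K. S (G K))"
    using G ivl_enclosure_mono[OF S(1)] unfolding hoelder_dominated_def dominated_on_def by blast
  ultimately show ?thesis unfolding hoelder_dominated_def ..
qed

lemma hoelder_dominated_ipowr_abs:
  assumes G: "hoelder_dominated \<Omega> G" and p: "1 \<le> p"
  shows "hoelder_dominated \<Omega> (\<lambda>K. ipowr (abs_interval (G K)) p)"
proof -
  obtain C g where Cg: "0 \<le> C" "0 < g" "g \<le> 1"
    "\<And>K. subbox K \<Omega> \<Longrightarrow> width (G K) \<le> C * box_width K powr g"
    using G unfolding hoelder_dominated_def unfolding hoelder_on_def by blast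
  let ?L = "p * mag (G \<Omega>) powr (p - 1)"
  have "hoelder_on \<Omega> (\<lambda>K. ipowr (abs_interval (G K)) p)"
  proof (rule hoelder_onI[of "?L * C" g])
    fix K assume K: "subbox K \<Omega>"
    have "width (ipowr (abs_interval (G K)) p) \<le> ?L * width (G K)"
      using G K p unfolding hoelder_dominated_def by (intro width_ipowr_abs_le mag_le_mag_top) auto
    also have "\<dots> \<le> ?L * (C * box_width K powr g)"
      using p Cg(4)[OF K] by (intro mult_left_mono) auto
    finally show "width (ipowr (abs_interval (G K)) p) \<le> ?L * C * box_width K powr g"
      by (simp add: mult.assoc)
  qed (use Cg p in auto)
  moreover have "dominated_on \<Omega> (\<lambda>K. ipowr (abs_interval (G K)) p)"
    using G p set_of_ipowr_abs_mono unfolding hoelder_dominated_def dominated_on_def by auto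
  ultimately show ?thesis unfolding hoelder_dominated_def ..
qed

context
  fixes s :: "real \<Rightarrow> real" and S :: "ivl \<Rightarrow> ivl" and d :: "nat \<Rightarrow> nat"
  assumes S: "ivl_enclosure s S" "ivl_hoelder S" and len: "length \<Omega> = d 0"
begin

lemma hoelder_dominated_ival_x:
  "k = 0 \<longrightarrow> j < d 0 \<Longrightarrow> hoelder_dominated \<Omega> (\<lambda>K. ival_x k d W b S K j)"
proof (induction k arbitrary: j)
  case 0
  then show ?case using hoelder_dominated_nth len by simp
next
  case (Suc k)
  have "hoelder_dominated \<Omega> (\<lambda>K. Fval (Suc k) d W b S K j)"
    unfolding Fval.simps
    by (intro hoelder_dominated_add hoelder_dominated_sum hoelder_dominated_mul
        hoelder_dominated_const Suc.IH) auto
  then show ?case unfolding ival_x_Suc_eq_Fval by (rule hoelder_dominated_activation[OF S])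
qed

lemma hoelder_dominated_Fval: "hoelder_dominated \<Omega> (\<lambda>K. Fval (Suc k) d W b S K i)"
  unfolding Fval.simps
  by (intro hoelder_dominated_add hoelder_dominated_sum hoelder_dominated_mul
      hoelder_dominated_const hoelder_dominated_ival_x) auto

lemma hoelder_dominated_jac_rec:
  assumes S': "ivl_enclosure s' S'" "ivl_hoelder S'"
  shows "hoelder_dominated \<Omega> (\<lambda>K. jac_rec n L d W b S S' K i j)"
proof (induction n arbitrary: i j)
  case 0
  then show ?case unfolding jac_rec.simps ipoint_mat_def by (rule hoelder_dominated_const)
next
  case (Suc n)
  show ?case
    unfolding jac_rec.simps Let_def imatmul_def idiag_def ipoint_mat_def
    by (intro hoelder_dominated_sum hoelder_dominated_mul hoelder_dominated_const
        hoelder_dominated_if Suc.IH hoelder_dominated_activation[OF S'] hoelder_dominated_Fval)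
qed

lemma hoelder_dominated_F_W1p:
  assumes "ivl_enclosure s' S'" "ivl_hoelder S'" "1 \<le> p"
  shows "hoelder_dominated \<Omega> (F_W1p L d W b S S' p)"
  unfolding F_W1p_def[abs_def] Jac_def
  by (intro hoelder_dominated_sum hoelder_dominated_add hoelder_dominated_ipowr_abs assms(3)
      hoelder_dominated_Fval hoelder_dominated_jac_rec[OF assms(1,2)])

end

end

lemma hoelder_on_imp_box_hoelder:
  assumes "hoelder_on \<Omega> F"
  shows "\<exists>C g. box_hoelder \<Omega> F C g"
proof -
  obtain C g where Cg: "0 \<le> C" "0 < g" "g \<le> 1"
    "\<And>K. subbox K \<Omega> \<Longrightarrow> width (F K) \<le> C * box_width K powr g"
    using assms unfolding hoelder_on_def by blast
  have "C * box_width K powr g \<le> (C + 1) * box_width K powr g" for K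
    by (intro mult_right_mono) auto
  then have "box_hoelder \<Omega> F (C + 1) g"
    unfolding box_hoelder_def using Cg by (auto intro: order_trans)
  then show ?thesis by blast
qed

section \<open>Partitions into boxes\<close>

text \<open>Half-open boxes tile exactly, whereas the closed boxes of a partition overlap on their faces.\<close>

definition ivl_co :: "ivl \<Rightarrow> real set" where
  "ivl_co Y = {lower Y ..< upper Y}"

definition box_co :: "box \<Rightarrow> (nat \<Rightarrow> real) set" where
  "box_co K = PiE {..<length K} (\<lambda>j. ivl_co (K ! j))"

definition nondegenerate :: "box \<Rightarrow> bool" where
  "nondegenerate K \<longleftrightarrow> (\<forall>j<length K. lower (K ! j) < upper (K ! j))"

definition uniform_piece :: "ivl \<Rightarrow> nat \<Rightarrow> nat \<Rightarrow> ivl" where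
  "uniform_piece X m k = Ivl (lower X + real k * width X / real m) (lower X + real (Suc k) * width X / real m)"

lemma set_split_uniform: "set (split_uniform X m) = uniform_piece X m ` {..<m}"
  unfolding split_uniform_def uniform_piece_def by auto

context
  fixes X :: ivl and m :: nat
  assumes X: "lower X < upper X" and m: "1 \<le> m"
begin

lemma lower_uniform_piece: "lower (uniform_piece X m k) = lower X + real k * (width X / real m)"
  and upper_uniform_piece: "upper (uniform_piece X m k) = lower X + (real k + 1) * (width X / real m)"
proof -
  have "real k * width X / real m \<le> real (Suc k) * width X / real m"
    using X m unfolding width_def by (intro divide_right_mono mult_right_mono) auto
  then show "lower (uniform_piece X m k) = lower X + real k * (width X / real m)"
    "upper (uniform_piece X m k) = lower X + (real k + 1) * (width X / real m)"
    unfolding uniform_piece_def by (simp_all add: lower_Ivl upper_Ivl add_ac)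
qed

lemma width_uniform_piece: "width (uniform_piece X m k) = width X / real m"
  unfolding width_def[of "uniform_piece X m k"] lower_uniform_piece upper_uniform_piece
  by (simp add: algebra_simps add_divide_distrib)

lemma uniform_piece_nondegenerate: "lower (uniform_piece X m k) < upper (uniform_piece X m k)"
  using X m unfolding lower_uniform_piece upper_uniform_piece width_def by (simp add: field_simps)

lemma set_of_uniform_piece_subset: "k < m \<Longrightarrow> set_of (uniform_piece X m k) \<subseteq> set_of X"
proof -
  assume "k < m"
  then have "(real k + 1) * (width X / real m) \<le> real m * (width X / real m)"
    using X unfolding width_def by (intro mult_right_mono) auto
  then have "(real k + 1) * (width X / real m) \<le> width X" using m by simp
  moreover have "0 \<le> real k * (width X / real m)" using X unfolding width_def by simp
  ultimately show ?thesis unfolding set_of_eq lower_uniform_piece upper_uniform_piece width_def by auto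
qed

lemma ivl_co_uniform_piece_subset: "k < m \<Longrightarrow> ivl_co (uniform_piece X m k) \<subseteq> ivl_co X"
  using set_of_uniform_piece_subset[of k] uniform_piece_nondegenerate[of k]
  unfolding ivl_co_def set_of_eq by auto

lemma ivl_co_uniform_piece_disjoint:
  assumes "k1 \<noteq> k2" shows "ivl_co (uniform_piece X m k1) \<inter> ivl_co (uniform_piece X m k2) = {}"
proof -
  have h: "0 < width X / real m" using X m unfolding width_def by simp
  have "upper (uniform_piece X m k) \<le> lower (uniform_piece X m k')" if "k < k'" for k k'
    using that mult_right_mono[OF _ less_imp_le[OF h], of "real k + 1" "real k'"]
    unfolding lower_uniform_piece upper_uniform_piece by simp
  from this[of k1 k2] this[of k2 k1] show ?thesis
    using assms unfolding ivl_co_def by (cases "k1 < k2") auto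
qed

lemma ivl_co_uniform_piece_cover:
  assumes x: "x \<in> ivl_co X" shows "\<exists>k<m. x \<in> ivl_co (uniform_piece X m k)"
proof -
  define h where "h = width X / real m"
  have h: "0 < h" using X m unfolding width_def h_def by simp
  define k where "k = nat \<lfloor>(x - lower X) / h\<rfloor>"
  have "0 \<le> (x - lower X) / h" using x h unfolding ivl_co_def by auto
  then have k: "real k \<le> (x - lower X) / h" "(x - lower X) / h < real k + 1"
    unfolding k_def by linarith+
  have "(x - lower X) / h < real m"
    using x h m unfolding ivl_co_def h_def width_def by (simp add: field_simps)
  then have "k < m" using k by linarith
  moreover have "real k * h \<le> x - lower X" "x - lower X < (real k + 1) * h"
    using k h by (simp_all add: pos_le_divide_eq pos_divide_less_eq)
  then have "x \<in> ivl_co (uniform_piece X m k)"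
    unfolding ivl_co_def lower_uniform_piece upper_uniform_piece h_def[symmetric] by auto
  ultimately show ?thesis by blast
qed

end

definition uniform_refinement :: "(ivl \<Rightarrow> nat) \<Rightarrow> box \<Rightarrow> box set" where
  "uniform_refinement f K = set (product_lists (map (\<lambda>X. split_uniform X (f X)) K))"

lemma mem_uniform_refinement_iff:
  "c \<in> uniform_refinement f K \<longleftrightarrow>
   length c = length K \<and> (\<forall>j<length K. \<exists>k<f (K ! j). c ! j = uniform_piece (K ! j) (f (K ! j)) k)"
  unfolding uniform_refinement_def product_lists_set list_all2_conv_all_nth
  by (auto simp: set_split_uniform image_iff Bex_def)

definition box_partition :: "box \<Rightarrow> box set \<Rightarrow> bool" where
  "box_partition \<Omega> P \<longleftrightarrow> finite P \<and> (\<forall>K\<in>P. subbox K \<Omega> \<and> nondegenerate K) \<and>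
     disjoint_family_on box_co P \<and> \<Union> (box_co ` P) = box_co \<Omega>"

context
  fixes K :: box and f :: "ivl \<Rightarrow> nat"
  assumes K: "nondegenerate K" and f: "\<And>j. j < length K \<Longrightarrow> 1 \<le> f (K ! j)"
begin

lemma uniform_refinement_nth:
  "c \<in> uniform_refinement f K \<Longrightarrow> j < length K \<Longrightarrow>
    \<exists>k<f (K ! j). c ! j = uniform_piece (K ! j) (f (K ! j)) k"
  unfolding mem_uniform_refinement_iff by blast

lemma nondegenerate_nth: "j < length K \<Longrightarrow> lower (K ! j) < upper (K ! j)"
  using K unfolding nondegenerate_def by blast

lemma width_nth_uniform_refinement:
  assumes "c \<in> uniform_refinement f K" "j < length K"
  shows "width (c ! j) = width (K ! j) / real (f (K ! j))"
proof -
  obtain k where "c ! j = uniform_piece (K ! j) (f (K ! j)) k"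
    using uniform_refinement_nth[OF assms] by blast
  then show ?thesis using width_uniform_piece[OF nondegenerate_nth[OF assms(2)] f[OF assms(2)]] by simp
qed

lemma uniform_refinement_subbox:
  assumes c: "c \<in> uniform_refinement f K"
  shows "subbox c K \<and> nondegenerate c"
proof -
  have "set_of (c ! j) \<subseteq> set_of (K ! j) \<and> lower (c ! j) < upper (c ! j)" if j: "j < length K" for j
  proof -
    obtain k where "k < f (K ! j)" "c ! j = uniform_piece (K ! j) (f (K ! j)) k"
      using uniform_refinement_nth[OF c j] by blast
    then show ?thesis
      using set_of_uniform_piece_subset[OF nondegenerate_nth[OF j] f[OF j]]
        uniform_piece_nondegenerate[OF nondegenerate_nth[OF j] f[OF j]]
      by simp
  qed
  then show ?thesis
    using c unfolding subbox_def nondegenerate_def mem_uniform_refinement_iff by simp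
qed

lemma uniform_refinement_disjoint: "disjoint_family_on box_co (uniform_refinement f K)"
  unfolding disjoint_family_on_def
proof (intro ballI impI)
  fix c1 c2 assume c: "c1 \<in> uniform_refinement f K" "c2 \<in> uniform_refinement f K" "c1 \<noteq> c2"
  then have len: "length c1 = length K" "length c2 = length K"
    unfolding mem_uniform_refinement_iff by simp_all
  obtain j where j: "j < length K" "c1 ! j \<noteq> c2 ! j" using c(3) len nth_equalityI by metis
  obtain k1 where k1: "c1 ! j = uniform_piece (K ! j) (f (K ! j)) k1"
    using uniform_refinement_nth[OF c(1) j(1)] by blast
  obtain k2 where k2: "c2 ! j = uniform_piece (K ! j) (f (K ! j)) k2"
    using uniform_refinement_nth[OF c(2) j(1)] by blast
  have "ivl_co (c1 ! j) \<inter> ivl_co (c2 ! j) = {}"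
    using j k1 k2 ivl_co_uniform_piece_disjoint[OF nondegenerate_nth[OF j(1)] f[OF j(1)], of k1 k2]
    by fastforce
  then show "box_co c1 \<inter> box_co c2 = {}" unfolding box_co_def using len j by (auto simp: PiE_iff)
qed

lemma Union_box_co_uniform_refinement: "\<Union> (box_co ` uniform_refinement f K) = box_co K"
proof
  show "\<Union> (box_co ` uniform_refinement f K) \<subseteq> box_co K"
  proof safe
    fix c x assume c: "c \<in> uniform_refinement f K" and x: "x \<in> box_co c"
    have "ivl_co (c ! j) \<subseteq> ivl_co (K ! j)" if j: "j < length K" for j
    proof -
      obtain k where "k < f (K ! j)" "c ! j = uniform_piece (K ! j) (f (K ! j)) k"
        using uniform_refinement_nth[OF c j] by blast
      then show ?thesis using ivl_co_uniform_piece_subset[OF nondegenerate_nth[OF j] f[OF j]] by simp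
    qed
    then show "x \<in> box_co K"
      using x c unfolding box_co_def mem_uniform_refinement_iff by (auto simp: PiE_iff)
  qed
  show "box_co K \<subseteq> \<Union> (box_co ` uniform_refinement f K)"
  proof
    fix x assume x: "x \<in> box_co K"
    have "\<exists>k<f (K ! j). x j \<in> ivl_co (uniform_piece (K ! j) (f (K ! j)) k)" if "j < length K" for j
      using x that unfolding box_co_def
      by (intro ivl_co_uniform_piece_cover nondegenerate_nth f) auto
    then obtain k where k: "\<And>j. j < length K \<Longrightarrow>
        k j < f (K ! j) \<and> x j \<in> ivl_co (uniform_piece (K ! j) (f (K ! j)) (k j))"
      by metis
    define c where "c = map (\<lambda>j. uniform_piece (K ! j) (f (K ! j)) (k j)) [0..<length K]"
    have "c \<in> uniform_refinement f K" unfolding mem_uniform_refinement_iff c_def using k by auto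
    moreover have "x \<in> box_co c" using x k unfolding box_co_def c_def by (auto simp: PiE_iff)
    ultimately show "x \<in> \<Union> (box_co ` uniform_refinement f K)" by blast
  qed
qed

lemma box_partition_uniform_refinement: "box_partition K (uniform_refinement f K)"
  unfolding box_partition_def
  using uniform_refinement_subbox uniform_refinement_disjoint Union_box_co_uniform_refinement
  by (simp add: uniform_refinement_def)

end

lemma box_partition_singleton: "nondegenerate K \<Longrightarrow> box_partition K {K}"
  unfolding box_partition_def disjoint_family_on_def by (simp add: subbox_refl)

lemma box_partition_UN:
  assumes P: "box_partition \<Omega> P" and R: "\<And>K. K \<in> P \<Longrightarrow> box_partition K (R K)"
  shows "box_partition \<Omega> (\<Union> (R ` P))"
proof -
  have R_sub: "subbox c K" "box_co c \<subseteq> box_co K" if "K \<in> P" "c \<in> R K" for K c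
    using R[OF that(1)] that(2) unfolding box_partition_def by blast+
  have "disjoint_family_on box_co (\<Union> (R ` P))"
    unfolding disjoint_family_on_def
  proof (intro ballI impI)
    fix c c' assume "c \<in> \<Union> (R ` P)" "c' \<in> \<Union> (R ` P)" "c \<noteq> c'"
    then obtain K K' where K: "K \<in> P" "c \<in> R K" and K': "K' \<in> P" "c' \<in> R K'" by blast
    show "box_co c \<inter> box_co c' = {}"
    proof (cases "K = K'")
      case True
      then show ?thesis using R[OF K(1)] K(2) K'(2) \<open>c \<noteq> c'\<close>
        unfolding box_partition_def disjoint_family_on_def by blast
    next
      case False
      then have "box_co K \<inter> box_co K' = {}"
        using P K(1) K'(1) unfolding box_partition_def disjoint_family_on_def by blast
      then show ?thesis using R_sub(2)[OF K] R_sub(2)[OF K'] by blast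
    qed
  qed
  moreover have "\<Union> (box_co ` \<Union> (R ` P)) = box_co \<Omega>"
  proof -
    have "\<Union> (box_co ` \<Union> (R ` P)) = (\<Union>K\<in>P. \<Union> (box_co ` R K))" by blast
    also have "\<dots> = \<Union> (box_co ` P)" using R unfolding box_partition_def by simp
    finally show ?thesis using P unfolding box_partition_def by simp
  qed
  moreover have "subbox c \<Omega> \<and> nondegenerate c" if "K \<in> P" "c \<in> R K" for K c
    using P R[OF that(1)] R_sub(1)[OF that] that unfolding box_partition_def by (blast intro: subbox_trans)
  ultimately show ?thesis
    using P R unfolding box_partition_def by auto
qed

lemma box_partition_refine:
  assumes P: "box_partition \<Omega> P" and "M \<subseteq> P" and R: "\<And>K. K \<in> M \<Longrightarrow> box_partition K (R K)"
  shows "box_partition \<Omega> ((P - M) \<union> \<Union> (R ` M))"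
proof -
  have "(P - M) \<union> \<Union> (R ` M) = \<Union> ((\<lambda>K. if K \<in> M then R K else {K}) ` P)"
    using \<open>M \<subseteq> P\<close> by auto
  moreover have "box_partition K (if K \<in> M then R K else {K})" if "K \<in> P" for K
    using R P that box_partition_singleton unfolding box_partition_def by auto
  ultimately show ?thesis using box_partition_UN[OF P] by presburger
qed

section \<open>Integrals over boxes\<close>

interpretation lborel_product: product_sigma_finite "\<lambda>_::nat. lborel :: real measure"
  by (intro product_sigma_finite.intro) (rule sigma_finite_lborel)

lemma prod_list_map_nth: "prod_list (map f xs) = (\<Prod>j<length xs. f (xs ! j))"
  for f :: "'a \<Rightarrow> real"
  by (induction xs) (simp_all add: prod.lessThan_Suc_shift del: prod.lessThan_Suc)

lemma box_vol_eq_prod: "box_vol K = (\<Prod>j<length K. width (K ! j))"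
  unfolding box_vol_def by (rule prod_list_map_nth)

lemma box_vol_nonneg: "0 \<le> box_vol K"
  unfolding box_vol_eq_prod by (intro prod_nonneg) (simp add: width_def)

lemma box_vol_pos: "nondegenerate K \<Longrightarrow> 0 < box_vol K"
  unfolding box_vol_eq_prod nondegenerate_def by (intro prod_pos) (auto simp: width_def)

lemma box_co_subset_box_set: "box_co K \<subseteq> box_set K"
  unfolding box_co_def box_set_def ivl_co_def set_of_eq by (intro PiE_mono) auto

lemma sets_box_co: "length K = n \<Longrightarrow> box_co K \<in> sets (lebesgue_n n)"
  unfolding box_co_def ivl_co_def by (erule subst) (intro sets_PiM_I_finite, auto)

lemma sets_box_set: "length K = n \<Longrightarrow> box_set K \<in> sets (lebesgue_n n)"
  unfolding box_set_def set_of_eq by (erule subst) (intro sets_PiM_I_finite, auto)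

lemma emeasure_box_co: "length K = n \<Longrightarrow> emeasure (lebesgue_n n) (box_co K) = box_vol K"
proof -
  assume len: "length K = n"
  have "emeasure (lebesgue_n n) (box_co K) = (\<Prod>j<n. emeasure lborel (ivl_co (K ! j)))"
    unfolding box_co_def len by (rule lborel_product.emeasure_PiM) (auto simp: ivl_co_def)
  also have "\<dots> = (\<Prod>j<n. ennreal (width (K ! j)))"
    unfolding ivl_co_def width_def by (intro prod.cong refl emeasure_lborel_Ico) simp
  also have "\<dots> = box_vol K"
    unfolding box_vol_eq_prod len by (rule prod_ennreal) (simp add: width_def)
  finally show ?thesis .
qed

lemma emeasure_box_set: "length K = n \<Longrightarrow> emeasure (lebesgue_n n) (box_set K) = box_vol K"
proof -
  assume len: "length K = n"
  have "emeasure (lebesgue_n n) (box_set K) = (\<Prod>j<n. emeasure lborel (set_of (K ! j)))"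
    unfolding box_set_def len by (rule lborel_product.emeasure_PiM) (auto simp: set_of_eq)
  also have "\<dots> = (\<Prod>j<n. ennreal (width (K ! j)))"
    unfolding set_of_eq width_def by (intro prod.cong refl emeasure_lborel_Icc) simp
  also have "\<dots> = box_vol K"
    unfolding box_vol_eq_prod len by (rule prod_ennreal) (simp add: width_def)
  finally show ?thesis .
qed

lemma box_set_diff_box_co_null:
  assumes "length K = n"
  shows "box_set K - box_co K \<in> null_sets (lebesgue_n n)"
proof (rule null_setsI)
  show "emeasure (lebesgue_n n) (box_set K - box_co K) = 0"
    using assms by (subst emeasure_Diff)
      (simp_all add: emeasure_box_co emeasure_box_set sets_box_co sets_box_set box_co_subset_box_set)
qed (intro sets.Diff sets_box_set sets_box_co assms)

lemma sum_box_vol_box_partition: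
  assumes "box_partition K P"
  shows "(\<Sum>c\<in>P. box_vol c) = box_vol K"
proof -
  have len: "length c = length K" if "c \<in> P" for c
    using assms that length_subbox unfolding box_partition_def by blast
  have "(\<Sum>c\<in>P. emeasure (lebesgue_n (length K)) (box_co c))
      = emeasure (lebesgue_n (length K)) (\<Union> (box_co ` P))"
    using assms len unfolding box_partition_def by (intro sum_emeasure) (auto intro: sets_box_co)
  then have "ennreal (\<Sum>c\<in>P. box_vol c) = ennreal (box_vol K)"
    using assms len unfolding box_partition_def
    by (simp add: emeasure_box_co sum_ennreal box_vol_nonneg)
  then show ?thesis by (simp add: box_vol_nonneg sum_nonneg)
qed

lemma borel_measurable_lebesgue_n_continuous:
  fixes g :: "(nat \<Rightarrow> real) \<Rightarrow> real"
  assumes "continuous_on UNIV g"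
  shows "g \<in> borel_measurable (lebesgue_n n)"
proof -
  have "(\<lambda>x. x i) \<in> borel_measurable (lebesgue_n n)" for i
  proof (cases "i < n")
    case False
    then have "(\<lambda>x. x i) \<in> borel_measurable (lebesgue_n n) \<longleftrightarrow> (\<lambda>x. undefined :: real) \<in> borel_measurable (lebesgue_n n)"
      by (intro measurable_cong) (auto simp: space_PiM PiE_iff extensional_def)
    then show ?thesis by simp
  qed (simp add: measurable_component_singleton)
  then have "(\<lambda>x. x) \<in> borel_measurable (lebesgue_n n)"
    by (rule measurable_coordinatewise_then_product)
  from measurable_compose[OF this borel_measurable_continuous_onI[OF assms]] show ?thesis by simp
qed

lemma box_set_eq_PiE_UNIV:
  "box_set K = PiE UNIV (\<lambda>i. if i < length K then set_of (K ! i) else {undefined})"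
  unfolding box_set_def by (rule set_eqI) (simp add: PiE_iff extensional_def imp_conjR all_conj_distrib Ball_def)

lemma compact_box_set: "compact (box_set K)"
proof -
  have "compactin (product_topology (\<lambda>_. euclideanreal) UNIV)
      (PiE UNIV (\<lambda>i. if i < length K then set_of (K ! i) else {undefined}))"
    unfolding compactin_PiE by (simp add: set_of_eq)
  then show ?thesis by (simp add: euclidean_product_topology box_set_eq_PiE_UNIV)
qed

lemma set_integrable_box_set:
  fixes g :: "(nat \<Rightarrow> real) \<Rightarrow> real"
  assumes g: "continuous_on UNIV g" and len: "length K = n"
  shows "set_integrable (lebesgue_n n) (box_set K) g"
proof -
  have "compact (g ` box_set K)"
    by (rule compact_continuous_image[OF continuous_on_subset[OF g] compact_box_set]) simp
  then have "bounded (g ` box_set K)" by (rule compact_imp_bounded)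
  then obtain B where B: "\<And>x. x \<in> box_set K \<Longrightarrow> \<bar>g x\<bar> \<le> B"
    unfolding bounded_real by blast
  have sets: "box_set K \<in> sets (lebesgue_n n)" by (rule sets_box_set[OF len])
  show ?thesis
  proof (rule set_integrable_bound)
    show "set_integrable (lebesgue_n n) (box_set K) (\<lambda>_. B)"
      unfolding set_integrable_def using sets emeasure_box_set[OF len]
      by (intro integrable_scaleR_left integrable_real_indicator) auto
    show "set_borel_measurable (lebesgue_n n) (box_set K) g"
      unfolding set_borel_measurable_def using borel_measurable_lebesgue_n_continuous[OF g] sets
      by (intro borel_measurable_indicator' borel_measurable_scaleR) (auto intro: measurable_ident_sets)
    show "AE x\<in>box_set K in lebesgue_n n. norm (g x) \<le> norm B"
      using B by (intro AE_I2) fastforce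
  qed
qed

lemma set_integrable_box_co:
  "continuous_on UNIV g \<Longrightarrow> length K = n \<Longrightarrow> set_integrable (lebesgue_n n) (box_co K) g"
  for g :: "(nat \<Rightarrow> real) \<Rightarrow> real"
  by (rule set_integrable_subset[OF set_integrable_box_set sets_box_co box_co_subset_box_set])

lemma set_integral_box_co_bounds:
  fixes g :: "(nat \<Rightarrow> real) \<Rightarrow> real"
  assumes g: "continuous_on UNIV g" and len: "length K = n"
    and bounds: "\<And>x. x \<in> box_co K \<Longrightarrow> g x \<in> set_of Y"
  shows "lower Y * box_vol K \<le> (LINT x:box_co K|lebesgue_n n. g x)"
    "(LINT x:box_co K|lebesgue_n n. g x) \<le> upper Y * box_vol K"
proof -
  have sets: "box_co K \<in> sets (lebesgue_n n)" and finite: "emeasure (lebesgue_n n) (box_co K) < \<infinity>"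
    using sets_box_co[OF len] emeasure_box_co[OF len] by simp_all
  have g_int: "set_integrable (lebesgue_n n) (box_co K) g"
    by (rule set_integrable_box_co[OF g len])
  have const_int: "set_integrable (lebesgue_n n) (box_co K) (\<lambda>_. c)" for c :: real
    unfolding set_integrable_def using sets finite by (intro integrable_scaleR_left integrable_real_indicator)
  have const: "(LINT x:box_co K|lebesgue_n n. c) = c * box_vol K" for c :: real
    using set_integral_const[OF sets, of c] finite emeasure_box_co[OF len]
    by (simp add: measure_def box_vol_nonneg mult.commute)
  show "lower Y * box_vol K \<le> (LINT x:box_co K|lebesgue_n n. g x)"
    using set_integral_mono[OF const_int g_int, of "lower Y"] bounds const by (simp add: set_of_eq)
  show "(LINT x:box_co K|lebesgue_n n. g x) \<le> upper Y * box_vol K"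
    using set_integral_mono[OF g_int const_int, of "upper Y"] bounds const by (simp add: set_of_eq)
qed

lemma set_integral_box_partition:
  fixes g :: "(nat \<Rightarrow> real) \<Rightarrow> real"
  assumes g: "continuous_on UNIV g" and P: "box_partition \<Omega> P"
  shows "(LINT x:box_set \<Omega>|lebesgue_n (length \<Omega>). g x) = (\<Sum>K\<in>P. LINT x:box_co K|lebesgue_n (length \<Omega>). g x)"
proof -
  let ?M = "lebesgue_n (length \<Omega>)"
  have measurable: "set_borel_measurable ?M A g" if "A \<in> sets ?M" for A
    unfolding set_borel_measurable_def using borel_measurable_lebesgue_n_continuous[OF g] that
    by (intro borel_measurable_indicator' borel_measurable_scaleR) (auto intro: measurable_ident_sets)
  have "(LINT x:box_set \<Omega>|?M. g x) = (LINT x:box_co \<Omega>|?M. g x)"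
  proof (rule set_integral_cong_set)
    show "AE x in ?M. x \<in> box_co \<Omega> \<longleftrightarrow> x \<in> box_set \<Omega>"
      using AE_not_in[OF box_set_diff_box_co_null[of \<Omega>]] box_co_subset_box_set by auto
  qed (intro measurable sets_box_co sets_box_set refl)+
  also have "\<dots> = (\<Sum>K\<in>P. LINT x:box_co K|?M. g x)"
    unfolding P[unfolded box_partition_def, THEN conjunct2, THEN conjunct2, THEN conjunct2, symmetric]
  proof (rule set_integral_finite_UN_AE)
    fix K assume K: "K \<in> P"
    then have len: "length K = length \<Omega>"
      using P length_subbox unfolding box_partition_def by blast
    show "box_co K \<in> sets ?M" by (rule sets_box_co[OF len])
    show "set_integrable ?M (box_co K) g" by (rule set_integrable_box_co[OF g len])
  next
    show "finite P" using P unfolding box_partition_def by blast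
    show "AE x in ?M. x \<in> box_co K \<and> x \<in> box_co K' \<longrightarrow> K = K'" if "K \<in> P" "K' \<in> P" for K K'
      using P that unfolding box_partition_def disjoint_family_on_def by (intro AE_I2) blast
  qed
  finally show ?thesis .
qed

section \<open>AdaQuad\<close>

lemma indicator_eta_nonneg: "0 \<le> indicator_eta F K"
  unfolding indicator_eta_def using box_vol_nonneg[of K] by (simp add: width_def)

lemma sum_UN_le:
  fixes e :: "'a \<Rightarrow> real"
  assumes "finite I" "\<And>i. i \<in> I \<Longrightarrow> finite (A i)" "\<And>x. 0 \<le> e x"
  shows "sum e (\<Union>i\<in>I. A i) \<le> (\<Sum>i\<in>I. sum e (A i))"
proof -
  have "(\<Union>i\<in>I. A i) = snd ` Sigma I A" by force
  then have "sum e (\<Union>i\<in>I. A i) \<le> sum (e \<circ> snd) (Sigma I A)"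
    using assms by (simp only:) (intro sum_image_le finite_SigmaI)
  also have "\<dots> = (\<Sum>i\<in>I. sum e (A i))"
    using assms by (simp add: sum.Sigma split_def comp_def)
  finally show ?thesis .
qed

lemma doerfler_step_grows:
  fixes eta :: "box \<Rightarrow> real"
  assumes "finite P" "M \<subseteq> P" "\<not> th * sum eta P \<le> sum eta M" "th * sum eta P \<le> sum eta P"
  shows "M \<subset> doerfler_step th eta P M \<and> doerfler_step th eta P M \<subseteq> P"
proof -
  have "P - M \<noteq> {}" using assms by auto
  then have "Max (eta ` (P - M)) \<in> eta ` (P - M)" using assms(1) by (intro Max_in) auto
  then obtain K where "K \<in> P - M" "eta K = Max (eta ` (P - M))" by auto
  then show ?thesis using assms(2,3) unfolding doerfler_step_def by auto
qed

lemma doerfler_marks_bulk: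
  fixes eta :: "box \<Rightarrow> real"
  assumes fin: "finite P" and nonneg: "\<And>K. K \<in> P \<Longrightarrow> 0 \<le> eta K" and "th \<le> 1"
  shows "doerfler th eta P \<subseteq> P" "th * sum eta P \<le> sum eta (doerfler th eta P)"
proof -
  define M where "M k = (doerfler_step th eta P ^^ k) {}" for k
  have full: "th * sum eta P \<le> sum eta P"
    using mult_right_mono[OF \<open>th \<le> 1\<close> sum_nonneg[OF nonneg]] by simp
  \<comment> \<open>Until the criterion holds, every step marks a new element.\<close>
  have inv: "M k \<subseteq> P \<and> (th * sum eta P \<le> sum eta (M k) \<or> k \<le> card (M k))" for k
  proof (induction k)
    case (Suc k)
    have step: "M (Suc k) = doerfler_step th eta P (M k)" by (simp add: M_def)
    show ?case
    proof (cases "th * sum eta P \<le> sum eta (M k)")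
      case True
      then show ?thesis using Suc.IH step by (simp add: doerfler_step_def)
    next
      case False
      then have "M k \<subset> M (Suc k)" "M (Suc k) \<subseteq> P" "k \<le> card (M k)"
        using doerfler_step_grows[OF fin _ _ full] Suc.IH step by auto
      moreover from this have "card (M k) < card (M (Suc k))"
        using fin by (intro psubset_card_mono) (auto intro: finite_subset)
      ultimately show ?thesis by simp
    qed
  qed (simp add: M_def)
  have "doerfler th eta P = M (card P)" unfolding doerfler_def M_def ..
  moreover have "th * sum eta P \<le> sum eta (M (card P))"
  proof (cases "th * sum eta P \<le> sum eta (M (card P))")
    case False
    then have "M (card P) = P" using inv[of "card P"] fin by (meson card_seteq)
    then show ?thesis using full by simp
  qed
  ultimately show "doerfler th eta P \<subseteq> P" "th * sum eta P \<le> sum eta (doerfler th eta P)"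
    using inv by auto
qed

lemma hoelder_refine_nonzero:
  "indicator_eta F K \<noteq> 0 \<Longrightarrow> hoelder_refine C g \<rho> F K =
    uniform_refinement (\<lambda>X. nat \<lceil>width X * (C * box_vol K / (\<rho> * indicator_eta F K)) powr (1 / g)\<rceil>) K"
  unfolding hoelder_refine_def uniform_refinement_def by (simp add: Let_def)

context
  fixes K :: box and T :: real
  assumes K: "nondegenerate K" and T: "0 < T"
begin

lemma one_le_ceiling_width: "j < length K \<Longrightarrow> 1 \<le> nat \<lceil>width (K ! j) * T\<rceil>"
  using K T unfolding nondegenerate_def width_def by (simp add: Suc_le_eq)

lemma box_partition_uniform_refinement_ceiling:
  "box_partition K (uniform_refinement (\<lambda>X. nat \<lceil>width X * T\<rceil>) K)"
  by (rule box_partition_uniform_refinement[where f="\<lambda>X. nat \<lceil>width X * T\<rceil>", OF K one_le_ceiling_width])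

lemma width_nth_uniform_refinement_ceiling:
  assumes "c \<in> uniform_refinement (\<lambda>X. nat \<lceil>width X * T\<rceil>) K" "j < length K"
  shows "width (c ! j) \<le> 1 / T"
proof -
  let ?n = "real (nat \<lceil>width (K ! j) * T\<rceil>)"
  have w: "0 < width (K ! j)" using K assms(2) unfolding nondegenerate_def width_def by auto
  have "width (c ! j) = width (K ! j) / ?n"
    using width_nth_uniform_refinement[where f="\<lambda>X. nat \<lceil>width X * T\<rceil>", OF K one_le_ceiling_width assms]
    by simp
  also have "\<dots> \<le> width (K ! j) / (width (K ! j) * T)"
  proof (rule divide_left_mono)
    show "width (K ! j) * T \<le> ?n" by linarith
    then show "0 < ?n * (width (K ! j) * T)" using w T by simp
  qed (use w in simp)
  also have "\<dots> = 1 / T" using w by simp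
  finally show ?thesis .
qed

end

lemma box_partition_hoelder_refine:
  assumes "0 < C" "0 < \<rho>" and K: "nondegenerate K"
  shows "box_partition K (hoelder_refine C g \<rho> F K)"
proof (cases "indicator_eta F K = 0")
  case True
  then show ?thesis unfolding hoelder_refine_def using box_partition_singleton[OF K] by simp
next
  case False
  then have "0 < (C * box_vol K / (\<rho> * indicator_eta F K)) powr (1 / g)"
    using assms indicator_eta_nonneg[of F K] box_vol_pos[OF K] by simp
  then show ?thesis
    unfolding hoelder_refine_nonzero[OF False] by (rule box_partition_uniform_refinement_ceiling[OF K])
qed

lemma box_hoelder_width_le:
  assumes "box_hoelder \<Omega> F C g" "subbox K \<Omega>" "K \<noteq> []" "box_width K \<le> h"
  shows "width (F K) \<le> C * h powr g"
proof -
  have "width (F K) \<le> C * box_width K powr g" using assms(1,2) unfolding box_hoelder_def by blast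
  also have "\<dots> \<le> C * h powr g"
    using assms box_width_nonneg[OF assms(3)] unfolding box_hoelder_def
    by (intro mult_left_mono powr_mono2) auto
  finally show ?thesis .
qed

lemma sum_indicator_eta_hoelder_refine_le:
  assumes hoelder: "box_hoelder \<Omega> F C g" and "0 < \<rho>"
    and K: "subbox K \<Omega>" "nondegenerate K" "K \<noteq> []"
  shows "sum (indicator_eta F) (hoelder_refine C g \<rho> F K) \<le> \<rho> * indicator_eta F K"
proof (cases "indicator_eta F K = 0")
  case True
  then show ?thesis unfolding hoelder_refine_def by simp
next
  case False
  let ?eta = "indicator_eta F K" and ?R = "hoelder_refine C g \<rho> F K"
  have "0 < C" "0 < g" using hoelder unfolding box_hoelder_def by auto
  have vol: "0 < box_vol K" using box_vol_pos[OF K(2)] .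
  have eta: "0 < ?eta" using False indicator_eta_nonneg[of F K] by simp
  \<comment> \<open>Every child has sides of length at most \<open>1 / T\<close>, where \<open>C * (1 / T) powr g = \<rho> * \<eta>\<^sub>K / vol K\<close>.\<close>
  define T where "T = (C * box_vol K / (\<rho> * ?eta)) powr (1 / g)"
  have T: "0 < T" "(1 / T) powr g = \<rho> * ?eta / (C * box_vol K)"
    using \<open>0 < C\<close> \<open>0 < g\<close> \<open>0 < \<rho>\<close> vol eta unfolding T_def by (simp_all add: powr_powr powr_divide)
  have R: "?R = uniform_refinement (\<lambda>X. nat \<lceil>width X * T\<rceil>) K"
    unfolding hoelder_refine_nonzero[OF False] T_def ..
  have partition: "box_partition K ?R"
    unfolding R by (rule box_partition_uniform_refinement_ceiling[OF K(2) T(1)])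
  have child: "indicator_eta F c \<le> \<rho> * ?eta / box_vol K * box_vol c" if c: "c \<in> ?R" for c
  proof -
    have cK: "subbox c K" using partition c unfolding box_partition_def by blast
    then have c_ne: "c \<noteq> []" using subbox_nonempty K(3) by blast
    have "box_width c \<le> 1 / T"
      using c width_nth_uniform_refinement_ceiling[OF K(2) T(1)] length_subbox[OF cK]
      unfolding R by (intro box_width_le c_ne) auto
    from box_hoelder_width_le[OF hoelder subbox_trans[OF cK K(1)] c_ne this]
    have "width (F c) \<le> \<rho> * ?eta / box_vol K"
      using T(2) \<open>0 < C\<close> by simp
    then show ?thesis unfolding indicator_eta_def using mult_right_mono[OF _ box_vol_nonneg] by blast
  qed
  have "sum (indicator_eta F) ?R \<le> (\<Sum>c\<in>?R. \<rho> * ?eta / box_vol K * box_vol c)"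
    by (rule sum_mono) (rule child)
  also have "\<dots> = \<rho> * ?eta / box_vol K * (\<Sum>c\<in>?R. box_vol c)"
    by (rule sum_distrib_left[symmetric])
  also have "\<dots> = \<rho> * ?eta"
    using vol by (simp add: sum_box_vol_box_partition[OF partition])
  finally show ?thesis .
qed

lemma sum_refine_marked_le:
  fixes e :: "'a \<Rightarrow> real"
  assumes "finite P" "M \<subseteq> P" "\<And>K. K \<in> M \<Longrightarrow> finite (R K)" "\<And>x. 0 \<le> e x" "\<rho> \<le> 1"
    and bulk: "\<theta> * sum e P \<le> sum e M" and reduce: "\<And>K. K \<in> M \<Longrightarrow> sum e (R K) \<le> \<rho> * e K"
  shows "sum e ((P - M) \<union> \<Union> (R ` M)) \<le> (1 - \<theta> * (1 - \<rho>)) * sum e P"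
proof -
  let ?R = "\<lambda>K. if K \<in> M then R K else {K}"
  have "sum e ((P - M) \<union> \<Union> (R ` M)) = sum e (\<Union>K\<in>P. ?R K)"
    using assms(2) by (intro arg_cong[where f="sum e"]) auto
  also have "\<dots> \<le> (\<Sum>K\<in>P. sum e (?R K))"
    using assms(1,3,4) by (intro sum_UN_le) auto
  also have "\<dots> \<le> (\<Sum>K\<in>P. if K \<in> M then \<rho> * e K else e K)"
    using reduce by (intro sum_mono) auto
  also have "\<dots> = \<rho> * sum e M + sum e (P - M)"
    using assms(1,2) by (simp add: sum.If_cases sum_distrib_left Int_absorb1 Diff_eq)
  also have "\<dots> = sum e P - (1 - \<rho>) * sum e M"
    using assms(1,2) by (simp add: sum_diff finite_subset algebra_simps)
  also have "\<dots> \<le> sum e P - (1 - \<rho>) * (\<theta> * sum e P)"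
    using bulk assms(5) by (intro diff_left_mono mult_left_mono) auto
  finally show ?thesis by (simp add: algebra_simps)
qed

lemma in_box_of_box_set: "x \<in> box_set K \<Longrightarrow> in_box x K"
  unfolding box_set_def in_box_def by (auto simp: PiE_iff)

lemma quad_bounds:
  assumes "valid_qrule \<Omega> R" "subbox K \<Omega>" "\<And>x. in_box x K \<Longrightarrow> f x \<in> set_of Y"
  shows "lower Y * box_vol K \<le> quad R f K" "quad R f K \<le> upper Y * box_vol K"
proof -
  have nodes: "0 < w" "lower Y \<le> f x" "f x \<le> upper Y" if "(w, x) \<in> set (R K)" for w x
    using assms that unfolding valid_qrule_def set_of_eq by fastforce+
  have weights: "sum_list (map fst (R K)) = box_vol K"
    using assms unfolding valid_qrule_def by blast
  have "lower Y * box_vol K = sum_list (map (\<lambda>(w, x). w * lower Y) (R K))"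
    unfolding weights[symmetric] by (simp add: sum_list_const_mult[symmetric] split_def mult.commute)
  also have "\<dots> \<le> quad R f K"
    unfolding quad_def using nodes by (intro sum_list_mono) (auto intro: mult_left_mono)
  finally show "lower Y * box_vol K \<le> quad R f K" .
  have "quad R f K \<le> sum_list (map (\<lambda>(w, x). w * upper Y) (R K))"
    unfolding quad_def using nodes by (intro sum_list_mono) (auto intro: mult_left_mono)
  also have "\<dots> = upper Y * box_vol K"
    unfolding weights[symmetric] by (simp add: sum_list_const_mult[symmetric] split_def mult.commute)
  finally show "quad R f K \<le> upper Y * box_vol K" .
qed

lemma abs_set_integral_minus_quad_le:
  assumes P: "box_partition \<Omega> P" and enc: "box_enclosure \<Omega> f F" and R: "valid_qrule \<Omega> R"
    and f: "continuous_on UNIV f"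
  shows "\<bar>(LINT x:box_set \<Omega>|lebesgue_n (length \<Omega>). f x) - (\<Sum>K\<in>P. quad R f K)\<bar>
      \<le> (\<Sum>K\<in>P. indicator_eta F K)"
proof -
  let ?I = "\<lambda>K. LINT x:box_co K|lebesgue_n (length \<Omega>). f x"
  have f_in: "\<And>x. in_box x K \<Longrightarrow> f x \<in> set_of (F K)" if "subbox K \<Omega>" for K
    using enc that unfolding box_enclosure_def by blast
  have integral: "(LINT x:box_set \<Omega>|lebesgue_n (length \<Omega>). f x) = (\<Sum>K\<in>P. ?I K)"
    by (rule set_integral_box_partition[OF f P])
  have each: "\<bar>?I K - quad R f K\<bar> \<le> indicator_eta F K" if "K \<in> P" for K
  proof -
    have K: "subbox K \<Omega>" using P that unfolding box_partition_def by blast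
    have "\<And>x. x \<in> box_co K \<Longrightarrow> f x \<in> set_of (F K)"
      using f_in[OF K] box_co_subset_box_set in_box_of_box_set by blast
    note integral_bounds = set_integral_box_co_bounds[OF f length_subbox[OF K] this]
    have quad_bounds: "lower (F K) * box_vol K \<le> quad R f K" "quad R f K \<le> upper (F K) * box_vol K"
      using quad_bounds[OF R K, where f=f and Y="F K"] f_in[OF K] by simp_all
    show ?thesis
      using integral_bounds quad_bounds unfolding indicator_eta_def width_def
      by (simp add: left_diff_distrib abs_le_iff)
  qed
  have "\<bar>\<Sum>K\<in>P. ?I K - quad R f K\<bar> \<le> (\<Sum>K\<in>P. \<bar>?I K - quad R f K\<bar>)"
    by (rule sum_abs)
  also have "\<dots> \<le> (\<Sum>K\<in>P. indicator_eta F K)"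
    by (intro sum_mono each)
  finally show ?thesis by (simp add: integral sum_subtractf)
qed

lemma quad_nonneg: "valid_qrule \<Omega> R \<Longrightarrow> subbox K \<Omega> \<Longrightarrow> (\<And>x. 0 \<le> f x) \<Longrightarrow> 0 \<le> quad R f K"
  unfolding valid_qrule_def quad_def by (fastforce intro!: sum_list_nonneg)

lemma powr_add_le_add_powr:
  fixes x y r :: real
  assumes "0 \<le> x" "0 \<le> y" "0 < r" "r \<le> 1"
  shows "(x + y) powr r \<le> x powr r + y powr r"
proof (cases "x + y = 0")
  case False
  define s where "s = x + y"
  have s: "0 < s" using False assms unfolding s_def by simp
  have le_powr: "t \<le> t powr r" if "0 \<le> t" "t \<le> 1" for t :: real
    using powr_mono'[of r 1 t] that assms by (cases "t = 0") simp_all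
  have "1 = x / s + y / s" using s unfolding s_def by (simp add: add_divide_distrib[symmetric])
  also have "\<dots> \<le> (x / s) powr r + (y / s) powr r"
    using assms s by (intro add_mono le_powr) (auto simp: s_def)
  also have "\<dots> = (x powr r + y powr r) / s powr r" by (simp add: powr_divide add_divide_distrib)
  finally show ?thesis using s unfolding s_def[symmetric] by (simp add: le_divide_eq)
qed (use assms in simp)

lemma abs_powr_diff_le:
  fixes a b r :: real
  assumes "0 \<le> a" "0 \<le> b" "0 < r" "r \<le> 1"
  shows "\<bar>a powr r - b powr r\<bar> \<le> \<bar>a - b\<bar> powr r"
proof -
  have *: "\<bar>a powr r - b powr r\<bar> \<le> \<bar>a - b\<bar> powr r" if "0 \<le> b" "b \<le> a" for a b
  proof -
    have "a powr r \<le> b powr r + (a - b) powr r"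
      using powr_add_le_add_powr[of b "a - b" r] that assms by simp
    moreover have "b powr r \<le> a powr r" using that assms by (intro powr_mono2) auto
    ultimately show ?thesis using that by simp
  qed
  show ?thesis
    using *[of b a] *[of a b] assms by (cases "b \<le> a") (auto simp: abs_minus_commute)
qed

context
  fixes \<theta> \<rho> C g :: real and F :: "box \<Rightarrow> ivl" and \<Omega> :: box
  assumes hoelder: "box_hoelder \<Omega> F C g" and \<theta>: "0 < \<theta>" "\<theta> \<le> 1" and \<rho>: "0 < \<rho>" "\<rho> < 1"
    and \<Omega>: "\<Omega> \<noteq> []" "nondegenerate \<Omega>"
begin

lemma box_partition_adaquad_P: "box_partition \<Omega> (adaquad_P \<theta> C g \<rho> F \<Omega> n)"
proof (induction n)
  case 0
  then show ?case using box_partition_singleton[OF \<Omega>(2)] by simp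
next
  case (Suc n)
  let ?P = "adaquad_P \<theta> C g \<rho> F \<Omega> n"
  let ?M = "doerfler \<theta> (indicator_eta F) ?P"
  have C: "0 < C" using hoelder unfolding box_hoelder_def by blast
  have fin: "finite ?P" using Suc.IH unfolding box_partition_def by blast
  have M: "?M \<subseteq> ?P" by (rule doerfler_marks_bulk(1)[OF fin indicator_eta_nonneg \<theta>(2)])
  have "nondegenerate K" if "K \<in> ?M" for K
    using Suc.IH M that unfolding box_partition_def by blast
  then have "box_partition \<Omega> ((?P - ?M) \<union> \<Union> (hoelder_refine C g \<rho> F ` ?M))"
    by (intro box_partition_refine[OF Suc.IH M] box_partition_hoelder_refine[OF C \<rho>(1)])
  then show ?case by (simp only: adaquad_P.simps Let_def)
qed

lemma adaquad_eta_Suc_le: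
  "adaquad_eta \<theta> C g \<rho> F \<Omega> (Suc n) \<le> (1 - \<theta> * (1 - \<rho>)) * adaquad_eta \<theta> C g \<rho> F \<Omega> n"
proof -
  let ?P = "adaquad_P \<theta> C g \<rho> F \<Omega> n"
  let ?M = "doerfler \<theta> (indicator_eta F) ?P"
  have P: "box_partition \<Omega> ?P" by (rule box_partition_adaquad_P)
  then have fin: "finite ?P" unfolding box_partition_def by blast
  note M = doerfler_marks_bulk[where eta="indicator_eta F", OF fin indicator_eta_nonneg \<theta>(2)]
  have C: "0 < C" using hoelder unfolding box_hoelder_def by blast
  have K: "subbox K \<Omega>" "nondegenerate K" "K \<noteq> []" if "K \<in> ?M" for K
  proof -
    show "subbox K \<Omega>" "nondegenerate K" using P M(1) that unfolding box_partition_def by blast+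
    then show "K \<noteq> []" using subbox_nonempty \<Omega>(1) by blast
  qed
  have "finite (hoelder_refine C g \<rho> F K)" if "K \<in> ?M" for K
    using box_partition_hoelder_refine[OF C \<rho>(1) K(2)[OF that]] unfolding box_partition_def by blast
  moreover have "sum (indicator_eta F) (hoelder_refine C g \<rho> F K) \<le> \<rho> * indicator_eta F K"
    if "K \<in> ?M" for K
    using sum_indicator_eta_hoelder_refine_le[OF hoelder \<rho>(1) K[OF that]] .
  ultimately show ?thesis
    unfolding adaquad_eta_def adaquad_P.simps Let_def
    using \<rho>(2) by (intro sum_refine_marked_le[OF fin M(1) _ indicator_eta_nonneg _ M(2)]) auto
qed

lemma adaquad_error:
  assumes "box_enclosure \<Omega> f F" "valid_qrule \<Omega> R" "continuous_on UNIV f"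
  shows "\<bar>(LINT x:box_set \<Omega>|lebesgue_n (length \<Omega>). f x) - adaquad_Q \<theta> C g \<rho> F \<Omega> R f n\<bar>
      \<le> adaquad_eta \<theta> C g \<rho> F \<Omega> n"
  unfolding adaquad_Q_def adaquad_eta_def
  by (rule abs_set_integral_minus_quad_le[OF box_partition_adaquad_P assms])


lemma adaquad_root_error:
  assumes "box_enclosure \<Omega> f F" "valid_qrule \<Omega> R" "continuous_on UNIV f" "\<And>x. 0 \<le> f x" "1 \<le> p"
  shows "\<bar>(LINT x:box_set \<Omega>|lebesgue_n (length \<Omega>). f x) powr (1 / p) - adaquad_Q \<theta> C g \<rho> F \<Omega> R f n powr (1 / p)\<bar>
      \<le> adaquad_eta \<theta> C g \<rho> F \<Omega> n powr (1 / p)"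
proof -
  let ?A = "LINT x:box_set \<Omega>|lebesgue_n (length \<Omega>). f x" and ?Q = "adaquad_Q \<theta> C g \<rho> F \<Omega> R f n"
  have "0 \<le> ?A"
    unfolding set_lebesgue_integral_def using assms(4) by (intro Bochner_Integration.integral_nonneg) simp
  moreover have "0 \<le> ?Q"
    unfolding adaquad_Q_def using box_partition_adaquad_P assms(2,4)
    by (intro sum_nonneg quad_nonneg) (auto simp: box_partition_def)
  ultimately have "\<bar>?A powr (1 / p) - ?Q powr (1 / p)\<bar> \<le> \<bar>?A - ?Q\<bar> powr (1 / p)"
    using assms(5) by (intro abs_powr_diff_le) auto
  also have "\<dots> \<le> adaquad_eta \<theta> C g \<rho> F \<Omega> n powr (1 / p)"
    using adaquad_error[OF assms(1-3)] assms(5) by (intro powr_mono2) auto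
  finally show ?thesis .
qed
end

section \<open>The Sobolev norm\<close>

lemma set_integral_sum:
  fixes g :: "'i \<Rightarrow> 'a \<Rightarrow> real"
  assumes "\<And>i. i \<in> I \<Longrightarrow> set_integrable M A (g i)"
  shows "(LINT x:A|M. \<Sum>i\<in>I. g i x) = (\<Sum>i\<in>I. LINT x:A|M. g i x)"
  using assms Bochner_Integration.integral_sum[where f="\<lambda>i x. indicator A x *\<^sub>R g i x"]
  unfolding set_lebesgue_integral_def set_integrable_def scaleR_sum_right by simp

lemma sobolev_W1p_norm_eq_integral:
  assumes s': "\<forall>x. (s has_real_derivative s' x) (at x)" "continuous_on UNIV s'"
    and "0 < p" and len: "length \<Omega> = d 0"
  shows "sobolev_W1p_norm (d 0) \<Omega> (d (Suc L)) (nn_eval L d W b s) p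
       = (LINT x:box_set \<Omega>|lebesgue_n (d 0). f_W1p L d W b s p x) powr (1 / p)"
proof -
  let ?int = "\<lambda>g. LINT x:box_set \<Omega>|lebesgue_n (d 0). g x"
  let ?g = "\<lambda>i x. \<bar>nn_eval L d W b s x i\<bar> powr p"
  let ?h = "\<lambda>i j x. \<bar>partial (\<lambda>y. nn_eval L d W b s y i) j x\<bar> powr p"
  have integrable: "set_integrable (lebesgue_n (d 0)) (box_set \<Omega>) g"
    if "continuous_on UNIV g" for g :: "(nat \<Rightarrow> real) \<Rightarrow> real"
    using set_integrable_box_set[OF that len] .
  have g: "continuous_on UNIV (?g i)" for i
    using \<open>0 < p\<close> by (intro continuous_on_powr' continuous_intros continuous_on_nn_eval[OF s']) auto
  have h: "continuous_on UNIV (?h i j)" for i j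
    using \<open>0 < p\<close> by (intro continuous_on_powr' continuous_intros continuous_on_partial_nn_eval[OF s']) auto
  have "?int (f_W1p L d W b s p) = (\<Sum>i<d (Suc L). ?int (\<lambda>x. ?g i x + (\<Sum>j<d 0. ?h i j x)))"
    unfolding f_W1p_def by (intro set_integral_sum integrable continuous_on_add continuous_on_sum g h)
  also have "\<dots> = (\<Sum>i<d (Suc L). ?int (?g i) + (\<Sum>j<d 0. ?int (?h i j)))"
    using g h by (intro sum.cong refl)
      (simp add: set_integral_add integrable continuous_on_sum set_integral_sum)
  finally show ?thesis unfolding sobolev_W1p_norm_def by simp
qed

theorem corollary4p14:
  fixes p \<theta> \<rho> :: real
    and L :: nat and d :: "nat \<Rightarrow> nat"
    and W :: "nat \<Rightarrow> nat \<Rightarrow> nat \<Rightarrow> real" and b :: "nat \<Rightarrow> nat \<Rightarrow> real"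
    and \<sigma> \<sigma>' :: "real \<Rightarrow> real" and \<Sigma> \<Sigma>' :: "real interval \<Rightarrow> real interval"
    and \<Omega> :: "real interval list"
  assumes p: "1 \<le> p"
    and theta: "0 < \<theta>" "\<theta> < 1"
    and rho: "0 < \<rho>" "\<rho> < 1"
    and widths: "\<forall>l \<le> Suc L. 1 \<le> d l"
    and Omega_dim: "length \<Omega> = d 0"
    and Omega_int: "\<forall>X \<in> set \<Omega>. lower X < upper X"
    and sigma_deriv: "\<forall>x. (\<sigma> has_real_derivative \<sigma>' x) (at x)"
    and Sigma: "ivl_enclosure \<sigma> \<Sigma>" "ivl_hoelder \<Sigma>"
    and Sigma': "ivl_enclosure \<sigma>' \<Sigma>'" "ivl_hoelder \<Sigma>'"
  shows "continuous_on UNIV (f_W1p L d W b \<sigma> p)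
       \<and> box_enclosure \<Omega> (f_W1p L d W b \<sigma> p) (F_W1p L d W b \<Sigma> \<Sigma>' p)
       \<and> (\<exists>C \<gamma>. box_hoelder \<Omega> (F_W1p L d W b \<Sigma> \<Sigma>' p) C \<gamma>)
       \<and> (\<forall>C \<gamma> R n. box_hoelder \<Omega> (F_W1p L d W b \<Sigma> \<Sigma>' p) C \<gamma> \<longrightarrow> valid_qrule \<Omega> R \<longrightarrow>
            \<bar>sobolev_W1p_norm (d 0) \<Omega> (d (Suc L)) (nn_eval L d W b \<sigma>) p
               - adaquad_Q \<theta> C \<gamma> \<rho> (F_W1p L d W b \<Sigma> \<Sigma>' p) \<Omega> R (f_W1p L d W b \<sigma> p) n powr (1 / p)\<bar>
              \<le> adaquad_eta \<theta> C \<gamma> \<rho> (F_W1p L d W b \<Sigma> \<Sigma>' p) \<Omega> n powr (1 / p)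
          \<and> adaquad_eta \<theta> C \<gamma> \<rho> (F_W1p L d W b \<Sigma> \<Sigma>' p) \<Omega> (Suc n)
              \<le> (1 - \<theta> * (1 - \<rho>)) * adaquad_eta \<theta> C \<gamma> \<rho> (F_W1p L d W b \<Sigma> \<Sigma>' p) \<Omega> n)"
proof (intro conjI allI impI)
  have \<sigma>': "continuous_on UNIV \<sigma>'" by (rule ivl_enclosure_hoelder_continuous[OF Sigma'])
  show f: "continuous_on UNIV (f_W1p L d W b \<sigma> p)"
    using continuous_on_f_W1p[OF sigma_deriv \<sigma>'] p by simp
  show enc: "box_enclosure \<Omega> (f_W1p L d W b \<sigma> p) (F_W1p L d W b \<Sigma> \<Sigma>' p)"
    using box_enclosure_F_W1p[where d=d and p=p, OF Sigma(1) Sigma'(1) sigma_deriv _ Omega_dim] p by simp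
  have \<Omega>: "\<Omega> \<noteq> []" "nondegenerate \<Omega>"
    using widths Omega_dim Omega_int by (auto simp: nondegenerate_def)
  show "\<exists>C \<gamma>. box_hoelder \<Omega> (F_W1p L d W b \<Sigma> \<Sigma>' p) C \<gamma>"
    using hoelder_dominated_F_W1p[where d=d, OF \<Omega>(1) Sigma Omega_dim Sigma' p] hoelder_on_imp_box_hoelder
    unfolding hoelder_dominated_def by blast
  fix C \<gamma> R n
  assume hoelder: "box_hoelder \<Omega> (F_W1p L d W b \<Sigma> \<Sigma>' p) C \<gamma>" and R: "valid_qrule \<Omega> R"
  note adaquad = hoelder theta(1) less_imp_le[OF theta(2)] rho \<Omega>
  show "adaquad_eta \<theta> C \<gamma> \<rho> (F_W1p L d W b \<Sigma> \<Sigma>' p) \<Omega> (Suc n)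
      \<le> (1 - \<theta> * (1 - \<rho>)) * adaquad_eta \<theta> C \<gamma> \<rho> (F_W1p L d W b \<Sigma> \<Sigma>' p) \<Omega> n"
    by (rule adaquad_eta_Suc_le[OF adaquad])
  show "\<bar>sobolev_W1p_norm (d 0) \<Omega> (d (Suc L)) (nn_eval L d W b \<sigma>) p
      - adaquad_Q \<theta> C \<gamma> \<rho> (F_W1p L d W b \<Sigma> \<Sigma>' p) \<Omega> R (f_W1p L d W b \<sigma> p) n powr (1 / p)\<bar>
      \<le> adaquad_eta \<theta> C \<gamma> \<rho> (F_W1p L d W b \<Sigma> \<Sigma>' p) \<Omega> n powr (1 / p)"
    using adaquad_root_error[OF adaquad enc R f _ p] p
    by (simp add: sobolev_W1p_norm_eq_integral[where d=d and p=p, OF sigma_deriv \<sigma>' _ Omega_dim] Omega_dim f_W1p_def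
        sum_nonneg)
qed

end
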